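(* Let $n\ge2$, let $X_1,\ldots,X_n$ be i.i.d. $N(\mu_0,\sigma^2)$, $\bar X=\frac1n\sum_iX_i$, $s^2=\frac1{n-1}\sum_i(X_i-\bar X)^2$, $t=\sqrt n(\bar X-\mu_0)/s$, $\nu_1=n-1$, and $U=n\log(1+t^2/\nu_1)$ (so $t$ has a Student $t$ distribution with $\nu_1$ degrees of freedom). Let $\Psi(x)=\Gamma'(x)/\Gamma(x)$ be the digamma function, $D(x)=\Psi\{(x+1)/2\}-\Psi(x/2)$, $m_1=nD(\nu_1)$ and $m_2=n^2\{D^2(\nu_1)-2D'(\nu_1)\}$. Then (a) for any $n\ge2$, $E(U)=m_1$ and $\mathrm{Var}(U)=m_2-m_1^2$; (b) as $n\to\infty$, $E(U)\to1$ and $\mathrm{Var}(U)\to2$.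
   Context: $\Gamma(x)=\int_0^\infty t^{x-1}e^{-t}\,dt$ is the gamma function. *)

theory Defs
  imports "HOL-Probability.Probability"
begin

text \<open>Sample X_1..X_n is represented by X 0, ..., X (n-1).\<close>

definition iid_normal :: "'a measure \<Rightarrow> (nat \<Rightarrow> 'a \<Rightarrow> real) \<Rightarrow> nat \<Rightarrow> real \<Rightarrow> real \<Rightarrow> bool" where
  "iid_normal M X n \<mu>0 \<sigma> \<longleftrightarrow>
     prob_space M \<and> prob_space.indep_vars M (\<lambda>_. borel) X {..<n} \<and>
     (\<forall>i<n. distributed M lborel (X i) (normal_density \<mu>0 \<sigma>))"

definition sample_mean :: "(nat \<Rightarrow> 'a \<Rightarrow> real) \<Rightarrow> nat \<Rightarrow> 'a \<Rightarrow> real" where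
  "sample_mean X n \<omega> = (\<Sum>i<n. X i \<omega>) / real n"

definition sample_var :: "(nat \<Rightarrow> 'a \<Rightarrow> real) \<Rightarrow> nat \<Rightarrow> 'a \<Rightarrow> real" where
  "sample_var X n \<omega> = (\<Sum>i<n. (X i \<omega> - sample_mean X n \<omega>)\<^sup>2) / (real n - 1)"

definition t_stat :: "(nat \<Rightarrow> 'a \<Rightarrow> real) \<Rightarrow> nat \<Rightarrow> real \<Rightarrow> 'a \<Rightarrow> real" where
  "t_stat X n \<mu>0 \<omega> = sqrt (real n) * (sample_mean X n \<omega> - \<mu>0) / sqrt (sample_var X n \<omega>)"

definition U_stat :: "(nat \<Rightarrow> 'a \<Rightarrow> real) \<Rightarrow> nat \<Rightarrow> real \<Rightarrow> 'a \<Rightarrow> real" where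
  "U_stat X n \<mu>0 \<omega> = real n * ln (1 + (t_stat X n \<mu>0 \<omega>)\<^sup>2 / (real n - 1))"

definition Dfun :: "real \<Rightarrow> real" where
  "Dfun x = Digamma ((x + 1) / 2) - Digamma (x / 2)"

definition m1 :: "nat \<Rightarrow> real" where
  "m1 n = real n * Dfun (real n - 1)"

definition m2 :: "nat \<Rightarrow> real" where
  "m2 n = (real n)\<^sup>2 * ((Dfun (real n - 1))\<^sup>2 - 2 * deriv Dfun (real n - 1))"

end

theory Submission
  imports Defs "HOL-Real_Asymp.Real_Asymp"
begin

text \<open>
  After standardising, \<open>t\<^sup>2 / (n - 1) = T\<^sup>2 / (n Q)\<close>, where \<open>T\<close> is the sum and \<open>Q\<close> the centred
  sum of squares of the standardised sample. Adding the observations one at a time, each step being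
  an orthogonal rotation of two independent normals (Helmert's recursion), shows that \<open>T\<close> and \<open>Q\<close>
  are independent, \<open>T \<sim> N(0, n)\<close> and \<open>Q\<close> chi-squared with \<open>n - 1\<close> degrees of freedom. Hence
  \<open>W = T\<^sup>2 / (n Q)\<close> is a ratio of independent Gamma variables and has the beta prime density
  \<open>w powr (-1/2) * (1 + w) powr (- n/2) / Beta ((n - 1)/2) (1/2)\<close>, so that
  \<open>E U\<^sup>p = n\<^sup>p / Beta ((n - 1)/2) (1/2) * \<integral> ln (1 + w)\<^sup>p * w powr (-1/2) * (1 + w) powr (- n/2) dw\<close>.

  These logarithmic moments are, up to sign, the derivatives in \<open>c\<close> of
  \<open>Beta (c - b) b = \<integral> w powr (b - 1) * (1 + w) powr (- c) dw\<close>. Instead of differentiating under the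
  integral we use that \<open>c \<mapsto> (1 + w) powr (- c)\<close> is convex: each logarithmic moment lies above
  its tangent line, and a differentiable function lying above a line through one of its points has
  that line as tangent. This expresses \<open>E U\<close> and \<open>E U\<^sup>2\<close> through digamma and trigamma values,
  i.e. by \<open>m1\<close> and \<open>m2\<close>.

  For the limits, \<open>\<Psi>(x + 1) - \<Psi>(x) = 1/x\<close> splits into two half steps, ordered by the concavity of
  \<open>\<Psi>\<close> (and likewise for the convex trigamma function); this squeezes \<open>m1 n\<close> and the variance
  between rational functions of \<open>n\<close> tending to \<open>1\<close> and \<open>2\<close>.
\<close>

section \<open>Normal, Gamma and chi-squared distributions\<close>

text \<open>The Gamma density with shape \<open>a\<close> and scale \<open>2\<close>, i.e. the chi-squared density with \<open>2 a\<close>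
  degrees of freedom.\<close>

definition gamma2_density :: "real \<Rightarrow> real \<Rightarrow> real" where
  "gamma2_density a x = (if 0 < x then x powr (a - 1) * exp (- x / 2) / (2 powr a * Gamma a) else 0)"

lemma gamma2_density_nonneg: "0 < a \<Longrightarrow> 0 \<le> gamma2_density a x"
  unfolding gamma2_density_def using Gamma_real_pos[of a] by auto

lemma borel_measurable_gamma2_density[measurable]: "gamma2_density a \<in> borel_measurable borel"
  unfolding gamma2_density_def by measurable

lemma nn_integral_powr_exp_scaled:
  fixes c l :: real
  assumes c: "0 < c" and l: "0 < l"
  shows "(\<integral>\<^sup>+x. ennreal (indicator {0<..} x * x powr (c - 1) * exp (- (l * x))) \<partial>lborel)
         = ennreal (Gamma c / l powr c)"
proof -
  let ?I = "\<integral>\<^sup>+x. ennreal (indicator {0<..} x * x powr (c - 1) * exp (- (l * x))) \<partial>lborel"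
  let ?f = "\<lambda>t. ennreal (indicator {0..} t * t powr (c - 1) / exp t)"
  have "ennreal (Gamma c) = (\<integral>\<^sup>+t. ?f t \<partial>lborel)"
    using Gamma_conv_nn_integral_real[OF c] by simp
  also have "\<dots> = ennreal l * (\<integral>\<^sup>+x. ?f (0 + l * x) \<partial>lborel)"
    using l by (subst nn_integral_real_affine[where c=l and t=0]) auto
  also have "(\<integral>\<^sup>+x. ?f (0 + l * x) \<partial>lborel) =
      (\<integral>\<^sup>+x. ennreal (l powr (c - 1)) * ennreal (indicator {0<..} x * x powr (c - 1) * exp (- (l * x))) \<partial>lborel)"
    using l by (intro nn_integral_cong) (auto simp: indicator_def powr_mult exp_minus field_simps
          ennreal_mult'[symmetric] zero_le_mult_iff not_less)
  also have "\<dots> = ennreal (l powr (c - 1)) * ?I"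
    by (rule nn_integral_cmult) measurable
  also have "ennreal l * (ennreal (l powr (c - 1)) * ?I) = ennreal (l powr c) * ?I"
    using l by (simp add: mult.assoc[symmetric] ennreal_mult'[symmetric] powr_diff)
  finally have "ennreal (Gamma c) = ennreal (l powr c) * ?I" .
  then have "ennreal (1 / l powr c) * ennreal (Gamma c) = ennreal (1 / l powr c) * (ennreal (l powr c) * ?I)"
    by (rule arg_cong)
  also have "\<dots> = ennreal (1 / l powr c * l powr c) * ?I"
    using l by (subst ennreal_mult') (auto simp: mult.assoc)
  also have "1 / l powr c * l powr c = 1"
    using l by simp
  finally show ?thesis
    using l by (simp add: ennreal_mult'[symmetric])
qed

lemma nn_integral_gamma2_density:
  assumes a: "0 < a"
  shows "(\<integral>\<^sup>+x. ennreal (gamma2_density a x) \<partial>lborel) = 1"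
proof -
  define K where "K = 1 / (2 powr a * Gamma a)"
  have K: "0 \<le> K" using Gamma_real_pos[OF a] by (simp add: K_def)
  have "(\<integral>\<^sup>+x. ennreal (gamma2_density a x) \<partial>lborel)
      = (\<integral>\<^sup>+x. ennreal K * ennreal (indicator {0<..} x * x powr (a - 1) * exp (- ((1/2) * x))) \<partial>lborel)"
    using K by (intro nn_integral_cong)
       (auto simp: gamma2_density_def K_def indicator_def ennreal_mult'[symmetric])
  also have "\<dots> = ennreal K * ennreal (Gamma a / (1/2) powr a)"
    using nn_integral_powr_exp_scaled[OF a, of "1/2"] by (subst nn_integral_cmult) auto
  also have "\<dots> = 1"
    using K Gamma_real_pos[OF a] by (simp add: ennreal_mult'[symmetric] K_def powr_divide)
  finally show ?thesis .
qed

lemma prob_space_gamma2_density: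
  "0 < a \<Longrightarrow> prob_space (density lborel (\<lambda>x. ennreal (gamma2_density a x)))"
  by (rule prob_spaceI) (simp add: emeasure_density nn_integral_gamma2_density)

lemma gamma2_density_product_rescaled:
  fixes a b r s :: real
  assumes a: "0 < a" and b: "0 < b" and r: "0 < r"
  shows "gamma2_density a (r - r * s) * gamma2_density b (r * s) =
     (r powr (a + b - 2) * exp (- r / 2) / (2 powr a * Gamma a * (2 powr b * Gamma b))) *
     (indicator {0..1} s * (s powr (b - 1) * (1 - s) powr (a - 1)))"
proof (cases "0 < s \<and> s < 1")
  case True
  then have s: "0 < s" "s < 1" by auto
  have e1: "(r - r * s) powr (a - 1) = r powr (a - 1) * (1 - s) powr (a - 1)"
    using r s by (simp add: powr_mult[symmetric] algebra_simps)
  have e2: "(r * s) powr (b - 1) = r powr (b - 1) * s powr (b - 1)"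
    using r s by (simp add: powr_mult)
  have e3: "r powr (a - 1) * r powr (b - 1) = r powr (a + b - 2)"
    using r by (simp add: powr_add[symmetric])
  have e4: "exp (- (r - r * s) / 2) * exp (- (r * s) / 2) = exp (- r / 2)"
    by (simp add: exp_add[symmetric] field_simps)
  have "gamma2_density a (r - r * s) * gamma2_density b (r * s) =
     ((r - r * s) powr (a - 1) * (r * s) powr (b - 1)) * (exp (- (r - r * s) / 2) * exp (- (r * s) / 2))
       / (2 powr a * Gamma a * (2 powr b * Gamma b))"
    using r s by (simp add: gamma2_density_def mult_less_cancel_left1)
  also have "\<dots> = (r powr (a + b - 2) * exp (- r / 2) / (2 powr a * Gamma a * (2 powr b * Gamma b))) *
     (indicator {0..1} s * (s powr (b - 1) * (1 - s) powr (a - 1)))"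
    unfolding e1 e2 e4 using s e3[symmetric] by (simp add: indicator_def field_simps)
  finally show ?thesis .
next
  case False
  then have "s \<le> 0 \<or> 1 \<le> s" by auto
  then have "\<not> 0 < r * s \<or> \<not> 0 < r - r * s"
    using r by (auto simp: mult_le_0_iff not_less algebra_simps)
  moreover have "indicator {0..1} s * (s powr (b - 1) * (1 - s) powr (a - 1)) = 0"
    using False by (auto simp: indicator_def)
  ultimately show ?thesis by (auto simp: gamma2_density_def)
qed

lemma gamma2_density_convolution:
  fixes a b r :: real
  assumes a: "0 < a" and b: "0 < b"
  shows "(\<integral>\<^sup>+y. ennreal (gamma2_density a (r - y) * gamma2_density b y) \<partial>lborel)
       = ennreal (gamma2_density (a + b) r)"
proof (cases "0 < r")
  case False
  have "(\<integral>\<^sup>+y. ennreal (gamma2_density a (r - y) * gamma2_density b y) \<partial>lborel) = 0"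
    using False by (intro nn_integral_zero' AE_I2) (auto simp: gamma2_density_def)
  then show ?thesis using False by (simp add: gamma2_density_def)
next
  case True
  note r = True
  define K where "K = r powr (a + b - 2) * exp (- r / 2) / (2 powr a * Gamma a * (2 powr b * Gamma b))"
  have K: "0 \<le> K" unfolding K_def using Gamma_real_pos[OF a] Gamma_real_pos[OF b] by simp
  have "(\<integral>\<^sup>+y. ennreal (gamma2_density a (r - y) * gamma2_density b y) \<partial>lborel)
      = ennreal \<bar>r\<bar> * (\<integral>\<^sup>+s. ennreal (gamma2_density a (r - (0 + r * s)) * gamma2_density b (0 + r * s)) \<partial>lborel)"
    using r by (intro nn_integral_real_affine) auto
  also have "(\<integral>\<^sup>+s. ennreal (gamma2_density a (r - (0 + r * s)) * gamma2_density b (0 + r * s)) \<partial>lborel)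
      = (\<integral>\<^sup>+s. ennreal K * ennreal (indicator {0..1} s * (s powr (b - 1) * (1 - s) powr (a - 1))) \<partial>lborel)"
    unfolding add_0 gamma2_density_product_rescaled[OF a b r] K_def[symmetric]
    using K by (intro nn_integral_cong) (simp add: ennreal_mult')
  also have "\<dots> = ennreal K * (\<integral>\<^sup>+s. ennreal (indicator {0..1} s * (s powr (b - 1) * (1 - s) powr (a - 1))) \<partial>lborel)"
    by (rule nn_integral_cmult) auto
  also have "(\<integral>\<^sup>+s. ennreal (indicator {0..1} s * (s powr (b - 1) * (1 - s) powr (a - 1))) \<partial>lborel) = ennreal (Beta b a)"
    by (rule nn_integral_has_integral_lebesgue) (auto intro: has_integral_Beta_real[OF b a])
  also have "ennreal \<bar>r\<bar> * (ennreal K * ennreal (Beta b a)) = ennreal (r * K * Beta b a)"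
    using r K by (simp add: ennreal_mult'[symmetric] mult.assoc)
  also have "r * K * Beta b a = gamma2_density (a + b) r"
  proof -
    have "r powr (a + b - 1) = r powr (1 + (a + b - 2))"
      by simp
    also have "\<dots> = r powr 1 * r powr (a + b - 2)"
      by (rule powr_add)
    also have "\<dots> = r * r powr (a + b - 2)"
      using r by simp
    finally have "r * r powr (a + b - 2) = r powr (a + b - 1)" ..
    moreover have "(2::real) powr a * 2 powr b = 2 powr (a + b)" by (simp add: powr_add)
    moreover have "0 < Gamma a" "0 < Gamma b" "0 < Gamma (a + b)"
      using a b by simp_all
    ultimately show ?thesis
      using r unfolding K_def Beta_def gamma2_density_def by (simp add: field_simps)
  qed
  finally show ?thesis .
qed

definition normal_measure :: "real \<Rightarrow> real \<Rightarrow> real measure" where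
  "normal_measure \<mu> \<sigma> = density lborel (\<lambda>x. ennreal (normal_density \<mu> \<sigma> x))"

text \<open>For \<open>m = 0\<close> this is the point mass at \<open>0\<close>, the law of the centred sum of squares of a
  single observation.\<close>

definition chi_squared :: "nat \<Rightarrow> real measure" where
  "chi_squared m = (if m = 0 then return borel 0
     else density lborel (\<lambda>x. ennreal (gamma2_density (real m / 2) x)))"

lemma sets_normal_measure[measurable_cong, simp]: "sets (normal_measure \<mu> \<sigma>) = sets borel"
  unfolding normal_measure_def by simp

lemma prob_space_normal_measure: "0 < \<sigma> \<Longrightarrow> prob_space (normal_measure \<mu> \<sigma>)"
  unfolding normal_measure_def by (rule prob_space_normal_density)

lemma sigma_finite_normal_measure: "0 < \<sigma> \<Longrightarrow> sigma_finite_measure (normal_measure \<mu> \<sigma>)"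
  by (rule prob_space_imp_sigma_finite[OF prob_space_normal_measure])

lemma sets_chi_squared[measurable_cong, simp]: "sets (chi_squared m) = sets borel"
  unfolding chi_squared_def by simp

lemma prob_space_chi_squared: "prob_space (chi_squared m)"
  unfolding chi_squared_def by (auto intro!: prob_space_gamma2_density prob_space_return)

lemma sigma_finite_chi_squared: "sigma_finite_measure (chi_squared m)"
  by (rule prob_space_imp_sigma_finite[OF prob_space_chi_squared])

lemma pair_sigma_finite_normal_chi_squared:
  "0 < \<sigma> \<Longrightarrow> pair_sigma_finite (normal_measure \<mu> \<sigma>) (chi_squared m)"
  unfolding pair_sigma_finite_def
  using sigma_finite_normal_measure sigma_finite_chi_squared by blast

lemma nn_integral_normal_measure:
  assumes [measurable]: "f \<in> borel_measurable borel"
  shows "(\<integral>\<^sup>+x. f x \<partial>normal_measure \<mu> \<sigma>) = (\<integral>\<^sup>+x. ennreal (normal_density \<mu> \<sigma> x) * f x \<partial>lborel)"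
  unfolding normal_measure_def by (subst nn_integral_density) auto

lemma nn_integral_normal_measure_standardize:
  fixes \<mu> \<sigma> :: real
  assumes s: "0 < \<sigma>" and [measurable]: "G \<in> borel_measurable borel"
  shows "(\<integral>\<^sup>+y. G ((y - \<mu>) / \<sigma>) \<partial>normal_measure \<mu> \<sigma>) = (\<integral>\<^sup>+z. G z \<partial>normal_measure 0 1)"
proof -
  have "(\<integral>\<^sup>+y. G ((y - \<mu>) / \<sigma>) \<partial>normal_measure \<mu> \<sigma>)
      = (\<integral>\<^sup>+y. ennreal (normal_density \<mu> \<sigma> y) * G ((y - \<mu>) / \<sigma>) \<partial>lborel)"
    by (rule nn_integral_normal_measure) measurable
  also have "\<dots> = ennreal \<bar>\<sigma>\<bar> * (\<integral>\<^sup>+z. ennreal (normal_density \<mu> \<sigma> (\<mu> + \<sigma> * z)) * G (((\<mu> + \<sigma> * z) - \<mu>) / \<sigma>) \<partial>lborel)"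
    using s by (intro nn_integral_real_affine) auto
  also have "\<dots> = (\<integral>\<^sup>+z. ennreal (\<sigma> * normal_density \<mu> \<sigma> (\<mu> + \<sigma> * z)) * G z \<partial>lborel)"
    using s by (subst nn_integral_cmult[symmetric]) (auto simp: ennreal_mult' mult.assoc)
  also have "\<dots> = (\<integral>\<^sup>+z. ennreal (normal_density 0 1 z) * G z \<partial>lborel)"
  proof (intro nn_integral_cong)
    fix z :: real
    have "\<sigma> * normal_density \<mu> \<sigma> (\<mu> + \<sigma> * z) = normal_density 0 1 z"
      using s unfolding normal_density_def
      by (simp add: real_sqrt_mult field_simps)
    then show "ennreal (\<sigma> * normal_density \<mu> \<sigma> (\<mu> + \<sigma> * z)) * G z = ennreal (normal_density 0 1 z) * G z"
      by simp
  qed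
  also have "\<dots> = (\<integral>\<^sup>+z. G z \<partial>normal_measure 0 1)"
    by (simp add: nn_integral_normal_measure)
  finally show ?thesis .
qed

lemma nn_integral_normal_measure_scale:
  assumes s: "0 < \<sigma>" and [measurable]: "G \<in> borel_measurable borel"
  shows "(\<integral>\<^sup>+t. G t \<partial>normal_measure 0 \<sigma>) = (\<integral>\<^sup>+v. G (\<sigma> * v) \<partial>normal_measure 0 1)"
  using nn_integral_normal_measure_standardize[OF s, of "\<lambda>z. G (\<sigma> * z)" 0] s by simp

lemma gamma2_density_half_square:
  assumes v: "0 < v"
  shows "gamma2_density (1/2) (v\<^sup>2) * (2 * v) = 2 * std_normal_density v"
proof -
  have "(v\<^sup>2) powr (1/2 - 1) = inverse v"
    using v by (simp add: powr_minus powr_half_sqrt)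
  moreover have "(2::real) powr (1/2) = sqrt 2" by (simp add: powr_half_sqrt)
  moreover have "sqrt (2 * pi) = sqrt 2 * sqrt pi" by (simp add: real_sqrt_mult)
  ultimately show ?thesis using v unfolding gamma2_density_def normal_density_def
    by (simp add: Gamma_one_half_real field_simps)
qed

lemma emeasure_std_normal_square_le:
  assumes r: "0 \<le> r"
  shows "emeasure (normal_measure 0 1) {v. v\<^sup>2 \<le> r\<^sup>2}
       = 2 * (\<integral>\<^sup>+v. ennreal (std_normal_density v * indicator {0<..r} v) \<partial>lborel)"
proof -
  let ?phi = "\<lambda>v. ennreal (std_normal_density v * indicator {0<..r} v)"
  let ?psi = "\<lambda>v. ennreal (std_normal_density v * indicator {0..r} v)"
  have "emeasure (normal_measure 0 1) {v. v\<^sup>2 \<le> r\<^sup>2}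
      = (\<integral>\<^sup>+v. ennreal (std_normal_density v) * indicator {v. v\<^sup>2 \<le> r\<^sup>2} v \<partial>lborel)"
    unfolding normal_measure_def by (subst emeasure_density) auto
  also have "\<dots> = (\<integral>\<^sup>+v. ?phi v + ?psi (0 + -1 * v) \<partial>lborel)"
  proof (rule nn_integral_cong)
    fix v :: real
    have "0 < v \<Longrightarrow> v\<^sup>2 \<le> r\<^sup>2 \<longleftrightarrow> v \<le> r" "v \<le> 0 \<Longrightarrow> v\<^sup>2 \<le> r\<^sup>2 \<longleftrightarrow> -v \<le> r"
      using r by (auto simp: power2_le_iff_abs_le)
    then show "ennreal (std_normal_density v) * indicator {v. v\<^sup>2 \<le> r\<^sup>2} v = ?phi v + ?psi (0 + -1 * v)"
      by (cases "0 < v") (auto simp: indicator_def normal_density_def)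
  qed
  also have "\<dots> = (\<integral>\<^sup>+v. ?phi v \<partial>lborel) + (\<integral>\<^sup>+v. ?psi (0 + -1 * v) \<partial>lborel)"
    by (rule nn_integral_add) auto
  also have "(\<integral>\<^sup>+v. ?psi (0 + -1 * v) \<partial>lborel) = (\<integral>\<^sup>+v. ?psi v \<partial>lborel)"
    using nn_integral_real_affine[of ?psi "-1" 0] by simp
  also have "\<dots> = (\<integral>\<^sup>+v. ?phi v \<partial>lborel)"
    by (rule nn_integral_cong_AE) (use AE_lborel_singleton[of 0] in \<open>auto simp: indicator_def\<close>)
  finally show ?thesis
    by (simp add: mult_2)
qed

lemma emeasure_square_std_normal_le:
  assumes x: "0 \<le> x"
  shows "emeasure (normal_measure 0 1) {v. v\<^sup>2 \<le> x} = emeasure (chi_squared 1) {..x}"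
proof -
  define r where "r = sqrt x"
  have r: "0 \<le> r" "x = r\<^sup>2" using x by (auto simp: r_def)
  have "emeasure (normal_measure 0 1) {v. v\<^sup>2 \<le> x}
      = ennreal 2 * (\<integral>\<^sup>+v. ennreal (std_normal_density v * indicator {0<..r} v) \<partial>lborel)"
    unfolding r(2) emeasure_std_normal_square_le[OF r(1)] by simp
  also have "\<dots> = (\<integral>\<^sup>+v. ennreal (gamma2_density (1/2) (v\<^sup>2) * (2 * v) * indicator {0..r} v) \<partial>lborel)"
  proof (subst nn_integral_cmult[symmetric], simp, rule nn_integral_cong)
    fix v :: real
    show "ennreal 2 * ennreal (std_normal_density v * indicator {0<..r} v)
        = ennreal (gamma2_density (1/2) (v\<^sup>2) * (2 * v) * indicator {0..r} v)"
    proof (cases "0 < v \<and> v \<le> r")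
      case True
      then have "gamma2_density (1/2) (v\<^sup>2) * (2 * v) * indicator {0..r} v
          = 2 * (std_normal_density v * indicator {0<..r} v)"
        using gamma2_density_half_square[of v] by (simp add: indicator_def)
      then show ?thesis
        by (simp only:) (rule ennreal_mult'[symmetric], simp)
    next
      case False
      then show ?thesis by (cases "v = 0") (auto simp: indicator_def gamma2_density_def)
    qed
  qed
  also have "\<dots> = (\<integral>\<^sup>+y. ennreal (gamma2_density (1/2) y * indicator {0\<^sup>2..r\<^sup>2} y) \<partial>lborel)"
    by (rule nn_integral_substitution[symmetric, where g'="\<lambda>v. 2 * v"])
       (auto intro!: derivative_eq_intros simp: r set_borel_measurable_def)
  also have "\<dots> = emeasure (chi_squared 1) {..x}"
    using r by (auto simp: chi_squared_def emeasure_density indicator_def gamma2_density_def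
        intro!: nn_integral_cong)
  finally show ?thesis .
qed

lemma distr_square_std_normal: "distr (normal_measure 0 1) borel (\<lambda>v. v\<^sup>2) = chi_squared 1"
proof (rule cdf_unique)
  interpret N: prob_space "normal_measure 0 1" by (rule prob_space_normal_measure) simp
  show "real_distribution (distr (normal_measure 0 1) borel (\<lambda>v. v\<^sup>2))"
    by (rule N.real_distribution_distr) simp
  show "real_distribution (chi_squared 1)"
    by (simp add: real_distribution_def real_distribution_axioms_def prob_space_chi_squared)
  show "cdf (distr (normal_measure 0 1) borel (\<lambda>v. v\<^sup>2)) = cdf (chi_squared 1)"
  proof
    fix x :: real
    have "emeasure (distr (normal_measure 0 1) borel (\<lambda>v. v\<^sup>2)) {..x} = emeasure (chi_squared 1) {..x}"
    proof (cases "x < 0")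
      case True
      have "\<not> v\<^sup>2 \<le> x" for v :: real
        using True zero_le_power2[of v] by linarith
      then have "(\<lambda>v. v\<^sup>2) -` {..x} = {}"
        by auto
      moreover have "emeasure (chi_squared 1) {..x} = 0"
        using True by (auto simp: chi_squared_def emeasure_density gamma2_density_def indicator_def
            intro!: nn_integral_zero')
      ultimately show ?thesis by (simp add: emeasure_distr)
    next
      case False
      have "(\<lambda>v. v\<^sup>2) -` {..x} = {v. v\<^sup>2 \<le> x}" by auto
      then show ?thesis
        using False emeasure_square_std_normal_le[of x] by (simp add: emeasure_distr)
    qed
    then show "cdf (distr (normal_measure 0 1) borel (\<lambda>v. v\<^sup>2)) x = cdf (chi_squared 1) x"
      unfolding cdf_def measure_def by simp
  qed
qed

lemma nn_integral_square_std_normal: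
  assumes [measurable]: "H \<in> borel_measurable borel"
  shows "(\<integral>\<^sup>+v. H (v\<^sup>2) \<partial>normal_measure 0 1) = (\<integral>\<^sup>+y. H y \<partial>chi_squared 1)"
proof -
  have "(\<integral>\<^sup>+v. H (v\<^sup>2) \<partial>normal_measure 0 1) = (\<integral>\<^sup>+y. H y \<partial>distr (normal_measure 0 1) borel (\<lambda>v. v\<^sup>2))"
    by (subst nn_integral_distr) auto
  then show ?thesis
    unfolding distr_square_std_normal .
qed

lemma nn_integral_gamma2_sum:
  assumes a: "0 < a" and b: "0 < b" and [measurable]: "H \<in> borel_measurable borel"
  shows "(\<integral>\<^sup>+q. \<integral>\<^sup>+y. H (q + y) \<partial>density lborel (\<lambda>x. ennreal (gamma2_density b x))
             \<partial>density lborel (\<lambda>x. ennreal (gamma2_density a x)))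
       = (\<integral>\<^sup>+r. H r \<partial>density lborel (\<lambda>x. ennreal (gamma2_density (a + b) x)))"
proof -
  have inner: "(\<integral>\<^sup>+y. H (q + y) \<partial>density lborel (\<lambda>x. ennreal (gamma2_density b x)))
      = (\<integral>\<^sup>+y. ennreal (gamma2_density b y) * H (q + y) \<partial>lborel)" for q
    by (rule nn_integral_density) measurable
  have "(\<integral>\<^sup>+q. \<integral>\<^sup>+y. H (q + y) \<partial>density lborel (\<lambda>x. ennreal (gamma2_density b x))
             \<partial>density lborel (\<lambda>x. ennreal (gamma2_density a x)))
      = (\<integral>\<^sup>+q. ennreal (gamma2_density a q) * (\<integral>\<^sup>+y. ennreal (gamma2_density b y) * H (q + y) \<partial>lborel) \<partial>lborel)"
    unfolding inner by (rule nn_integral_density) measurable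
  also have "\<dots> = (\<integral>\<^sup>+q. \<integral>\<^sup>+y. ennreal (gamma2_density a q) * ennreal (gamma2_density b y) * H (q + y) \<partial>lborel \<partial>lborel)"
    by (rule nn_integral_cong) (simp add: nn_integral_cmult[symmetric] mult.assoc)
  also have "\<dots> = (\<integral>\<^sup>+y. \<integral>\<^sup>+q. ennreal (gamma2_density a q) * ennreal (gamma2_density b y) * H (q + y) \<partial>lborel \<partial>lborel)"
    by (rule lborel_pair.Fubini'[symmetric]) measurable
  also have "\<dots> = (\<integral>\<^sup>+y. \<integral>\<^sup>+r. ennreal (gamma2_density a (r - y)) * ennreal (gamma2_density b y) * H r \<partial>lborel \<partial>lborel)"
  proof (rule nn_integral_cong)
    fix y :: real
    have "(\<integral>\<^sup>+q. ennreal (gamma2_density a q) * ennreal (gamma2_density b y) * H (q + y) \<partial>lborel)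
        = ennreal \<bar>1\<bar> * (\<integral>\<^sup>+r. ennreal (gamma2_density a (-y + 1 * r)) * ennreal (gamma2_density b y)
            * H ((-y + 1 * r) + y) \<partial>lborel)"
      by (rule nn_integral_real_affine) measurable
    then show "(\<integral>\<^sup>+q. ennreal (gamma2_density a q) * ennreal (gamma2_density b y) * H (q + y) \<partial>lborel)
        = (\<integral>\<^sup>+r. ennreal (gamma2_density a (r - y)) * ennreal (gamma2_density b y) * H r \<partial>lborel)"
      by simp
  qed
  also have "\<dots> = (\<integral>\<^sup>+r. \<integral>\<^sup>+y. ennreal (gamma2_density a (r - y)) * ennreal (gamma2_density b y) * H r \<partial>lborel \<partial>lborel)"
    by (rule lborel_pair.Fubini') measurable
  also have "\<dots> = (\<integral>\<^sup>+r. ennreal (gamma2_density (a + b) r) * H r \<partial>lborel)"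
  proof (rule nn_integral_cong)
    fix r :: real
    have "(\<integral>\<^sup>+y. ennreal (gamma2_density a (r - y)) * ennreal (gamma2_density b y) * H r \<partial>lborel)
        = (\<integral>\<^sup>+y. ennreal (gamma2_density a (r - y) * gamma2_density b y) \<partial>lborel) * H r"
      using a by (simp add: nn_integral_multc ennreal_mult' gamma2_density_nonneg)
    then show "(\<integral>\<^sup>+y. ennreal (gamma2_density a (r - y)) * ennreal (gamma2_density b y) * H r \<partial>lborel)
        = ennreal (gamma2_density (a + b) r) * H r"
      using gamma2_density_convolution[OF a b] by simp
  qed
  also have "\<dots> = (\<integral>\<^sup>+r. H r \<partial>density lborel (\<lambda>x. ennreal (gamma2_density (a + b) x)))"
    by (subst nn_integral_density) auto
  finally show ?thesis .
qed

lemma nn_integral_chi_squared_Suc: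
  assumes [measurable]: "H \<in> borel_measurable borel"
  shows "(\<integral>\<^sup>+q. \<integral>\<^sup>+v. H (q + v\<^sup>2) \<partial>normal_measure 0 1 \<partial>chi_squared m) = (\<integral>\<^sup>+r. H r \<partial>chi_squared (Suc m))"
proof -
  have "(\<integral>\<^sup>+q. \<integral>\<^sup>+v. H (q + v\<^sup>2) \<partial>normal_measure 0 1 \<partial>chi_squared m)
      = (\<integral>\<^sup>+q. \<integral>\<^sup>+y. H (q + y) \<partial>chi_squared 1 \<partial>chi_squared m)"
    by (intro nn_integral_cong nn_integral_square_std_normal) measurable
  also have "\<dots> = (\<integral>\<^sup>+r. H r \<partial>chi_squared (Suc m))"
  proof (cases "m = 0")
    case True
    have "(\<lambda>q. \<integral>\<^sup>+y. H (q + y) \<partial>chi_squared 1) \<in> borel_measurable borel"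
      using sigma_finite_measure.borel_measurable_nn_integral_fst[OF sigma_finite_chi_squared,
          of "\<lambda>(q, y). H (q + y)" borel]
      by simp
    then show ?thesis
      using True by (simp add: chi_squared_def nn_integral_return)
  next
    case False
    have half: "real (Suc m) / 2 = real m / 2 + 1 / 2"
      by (simp add: field_simps)
    show ?thesis
      using False nn_integral_gamma2_sum[of "real m / 2" "1/2" H]
      unfolding chi_squared_def half by simp
  qed
  finally show ?thesis .
qed

section \<open>Rotating independent normals\<close>

lemma normal_density_rotation:
  fixes a b u v z :: real
  assumes a: "0 < a" and b: "0 < b" and bb: "b\<^sup>2 = a\<^sup>2 + 1" and zz: "z = (u + a * b * v) / b\<^sup>2"
  shows "(a * b / b\<^sup>2) * (normal_density 0 a (u - z) * std_normal_density z)
       = normal_density 0 b u * std_normal_density v"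
proof -
  have "a * a + 1 \<noteq> 0"
    using zero_le_square[of a] by linarith
  then have uz: "u - z = (a * a * u - a * b * v) / b\<^sup>2"
    unfolding zz bb by (simp add: field_simps power2_eq_square)
  have 1: "(u - z)\<^sup>2 / (2 * a\<^sup>2) = (a * u - b * v)\<^sup>2 / (2 * b\<^sup>2 * b\<^sup>2)"
    unfolding uz using a b by (simp add: power2_eq_square field_simps)
  have 2: "z\<^sup>2 / 2 = (u + a * b * v)\<^sup>2 / (2 * b\<^sup>2 * b\<^sup>2)"
    unfolding zz using b by (simp add: field_simps power2_eq_square)
  have "(a * u - b * v)\<^sup>2 + (u + a * b * v)\<^sup>2 = (a\<^sup>2 + 1) * u\<^sup>2 + b\<^sup>2 * (1 + a\<^sup>2) * v\<^sup>2"
    by (simp add: power2_eq_square algebra_simps)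
  also have "\<dots> = b\<^sup>2 * (u\<^sup>2 + b\<^sup>2 * v\<^sup>2)"
    using bb by (simp add: algebra_simps)
  finally have expo: "(u - z)\<^sup>2 / (2 * a\<^sup>2) + z\<^sup>2 / 2 = u\<^sup>2 / (2 * b\<^sup>2) + v\<^sup>2 / 2"
    unfolding 1 2 add_divide_distrib[symmetric] using b by (simp add: field_simps power2_eq_square)
  have L: "(a * b / b\<^sup>2) * (normal_density 0 a (u - z) * std_normal_density z)
       = (a * b / b\<^sup>2) / (sqrt (2 * pi) * a * sqrt (2 * pi)) * exp (- ((u - z)\<^sup>2 / (2 * a\<^sup>2) + z\<^sup>2 / 2))"
    unfolding normal_density_def using a
    by (simp add: real_sqrt_mult exp_add[symmetric] exp_minus field_simps)
  have R: "normal_density 0 b u * std_normal_density v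
       = 1 / (sqrt (2 * pi) * b * sqrt (2 * pi)) * exp (- (u\<^sup>2 / (2 * b\<^sup>2) + v\<^sup>2 / 2))"
    unfolding normal_density_def using b
    by (simp add: real_sqrt_mult exp_add[symmetric] exp_minus field_simps)
  show ?thesis unfolding L R expo using a b by (simp add: field_simps power2_eq_square)
qed

lemma nn_integral_normal_rotation_fibre:
  fixes a b u :: real
  assumes a: "0 < a" and b: "0 < b" and bb: "b\<^sup>2 = a\<^sup>2 + 1"
    and [measurable]: "g \<in> borel_measurable borel"
  shows "(\<integral>\<^sup>+z. ennreal (normal_density 0 a (u - z)) * ennreal (std_normal_density z)
            * g ((b\<^sup>2 * z - u) / (a * b)) \<partial>lborel)
       = (\<integral>\<^sup>+v. ennreal (normal_density 0 b u) * ennreal (std_normal_density v) * g v \<partial>lborel)"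
proof -
  let ?z = "\<lambda>v. u / b\<^sup>2 + a * b / b\<^sup>2 * v"
  have "(\<integral>\<^sup>+z. ennreal (normal_density 0 a (u - z)) * ennreal (std_normal_density z)
            * g ((b\<^sup>2 * z - u) / (a * b)) \<partial>lborel)
      = ennreal \<bar>a * b / b\<^sup>2\<bar> * (\<integral>\<^sup>+v. ennreal (normal_density 0 a (u - ?z v))
            * ennreal (std_normal_density (?z v)) * g ((b\<^sup>2 * ?z v - u) / (a * b)) \<partial>lborel)"
    using a b by (intro nn_integral_real_affine) auto
  also have "\<dots> = (\<integral>\<^sup>+v. ennreal (a * b / b\<^sup>2) * (ennreal (normal_density 0 a (u - ?z v))
            * ennreal (std_normal_density (?z v))) * g ((b\<^sup>2 * ?z v - u) / (a * b)) \<partial>lborel)"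
    using a b by (subst nn_integral_cmult[symmetric]) (measurable, simp add: mult.assoc)
  also have "\<dots> = (\<integral>\<^sup>+v. ennreal (normal_density 0 b u) * ennreal (std_normal_density v) * g v \<partial>lborel)"
  proof (rule nn_integral_cong)
    fix v :: real
    have z: "?z v = (u + a * b * v) / b\<^sup>2"
      by (simp add: add_divide_distrib)
    have "(b\<^sup>2 * ?z v - u) / (a * b) = v"
      unfolding z using a b by (simp add: field_simps)
    moreover have "ennreal (a * b / b\<^sup>2) * (ennreal (normal_density 0 a (u - ?z v)) * ennreal (std_normal_density (?z v)))
        = ennreal (normal_density 0 b u) * ennreal (std_normal_density v)"
      using normal_density_rotation[OF a b bb z] a b by (simp add: ennreal_mult'[symmetric])
    ultimately show "ennreal (a * b / b\<^sup>2) * (ennreal (normal_density 0 a (u - ?z v))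
          * ennreal (std_normal_density (?z v))) * g ((b\<^sup>2 * ?z v - u) / (a * b))
        = ennreal (normal_density 0 b u) * ennreal (std_normal_density v) * g v"
      by simp
  qed
  finally show ?thesis .
qed

text \<open>If \<open>T \<sim> N(0, a\<^sup>2)\<close> and \<open>Z \<sim> N(0, 1)\<close> are independent, so are \<open>T + Z \<sim> N(0, b\<^sup>2)\<close> and
  \<open>(a\<^sup>2 Z - T) / (a b) \<sim> N(0, 1)\<close>: the map is an orthogonal change of coordinates.\<close>

lemma nn_integral_normal_rotation:
  fixes a b :: real
  assumes a: "0 < a" and b: "0 < b" and bb: "b\<^sup>2 = a\<^sup>2 + 1"
    and [measurable]: "(\<lambda>(x, y). h x y) \<in> borel_measurable (borel \<Otimes>\<^sub>M borel)"
  shows "(\<integral>\<^sup>+t. \<integral>\<^sup>+z. h (t + z) ((a\<^sup>2 * z - t) / (a * b)) \<partial>normal_measure 0 1 \<partial>normal_measure 0 a)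
       = (\<integral>\<^sup>+u. \<integral>\<^sup>+v. h u v \<partial>normal_measure 0 1 \<partial>normal_measure 0 b)"
proof -
  let ?pa = "\<lambda>x. ennreal (normal_density 0 a x)"
  let ?pb = "\<lambda>x. ennreal (normal_density 0 b x)"
  let ?p1 = "\<lambda>x. ennreal (std_normal_density x)"
  have "(\<integral>\<^sup>+t. \<integral>\<^sup>+z. h (t + z) ((a\<^sup>2 * z - t) / (a * b)) \<partial>normal_measure 0 1 \<partial>normal_measure 0 a)
      = (\<integral>\<^sup>+t. \<integral>\<^sup>+z. ?pa t * ?p1 z * h (t + z) ((a\<^sup>2 * z - t) / (a * b)) \<partial>lborel \<partial>lborel)"
    by (simp add: nn_integral_normal_measure nn_integral_cmult[symmetric] mult.assoc)
  also have "\<dots> = (\<integral>\<^sup>+z. \<integral>\<^sup>+t. ?pa t * ?p1 z * h (t + z) ((a\<^sup>2 * z - t) / (a * b)) \<partial>lborel \<partial>lborel)"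
    by (rule lborel_pair.Fubini'[symmetric]) measurable
  also have "\<dots> = (\<integral>\<^sup>+z. \<integral>\<^sup>+u. ?pa (u - z) * ?p1 z * h u ((b\<^sup>2 * z - u) / (a * b)) \<partial>lborel \<partial>lborel)"
  proof (rule nn_integral_cong)
    fix z :: real
    have "(\<integral>\<^sup>+t. ?pa t * ?p1 z * h (t + z) ((a\<^sup>2 * z - t) / (a * b)) \<partial>lborel)
        = ennreal \<bar>1\<bar> * (\<integral>\<^sup>+u. ?pa (-z + 1 * u) * ?p1 z
            * h ((-z + 1 * u) + z) ((a\<^sup>2 * z - (-z + 1 * u)) / (a * b)) \<partial>lborel)"
      by (rule nn_integral_real_affine) measurable
    then show "(\<integral>\<^sup>+t. ?pa t * ?p1 z * h (t + z) ((a\<^sup>2 * z - t) / (a * b)) \<partial>lborel)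
        = (\<integral>\<^sup>+u. ?pa (u - z) * ?p1 z * h u ((b\<^sup>2 * z - u) / (a * b)) \<partial>lborel)"
      using bb by (simp add: algebra_simps)
  qed
  also have "\<dots> = (\<integral>\<^sup>+u. \<integral>\<^sup>+z. ?pa (u - z) * ?p1 z * h u ((b\<^sup>2 * z - u) / (a * b)) \<partial>lborel \<partial>lborel)"
    by (rule lborel_pair.Fubini') measurable
  also have "\<dots> = (\<integral>\<^sup>+u. \<integral>\<^sup>+v. ?pb u * ?p1 v * h u v \<partial>lborel \<partial>lborel)"
    by (intro nn_integral_cong nn_integral_normal_rotation_fibre[OF a b bb]) measurable
  also have "\<dots> = (\<integral>\<^sup>+u. \<integral>\<^sup>+v. h u v \<partial>normal_measure 0 1 \<partial>normal_measure 0 b)"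
    by (simp add: nn_integral_normal_measure nn_integral_cmult[symmetric] mult.assoc)
  finally show ?thesis .
qed

lemma borel_measurable_nn_integral_std_normal:
  assumes "(\<lambda>(p, z). g (fst p) (snd p) z) \<in> borel_measurable ((borel \<Otimes>\<^sub>M borel) \<Otimes>\<^sub>M borel)"
  shows "(\<lambda>(t, q). \<integral>\<^sup>+z. g t q z \<partial>normal_measure 0 1) \<in> borel_measurable (borel \<Otimes>\<^sub>M borel)"
proof -
  have "(\<lambda>(p, z). g (fst p) (snd p) z) \<in> borel_measurable ((borel \<Otimes>\<^sub>M borel) \<Otimes>\<^sub>M normal_measure 0 1)"
    using assms
    by (subst measurable_cong_sets[OF sets_pair_measure_cong[OF refl sets_normal_measure] refl])
  from sigma_finite_measure.borel_measurable_nn_integral_fst[OF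
      sigma_finite_normal_measure[OF zero_less_one] this]
  show ?thesis
    by (simp add: case_prod_beta')
qed

lemma nn_integral_normal_chi_squared_step:
  fixes a b :: real
  assumes a: "0 < a" and b: "0 < b" and bb: "b\<^sup>2 = a\<^sup>2 + 1"
    and h[measurable]: "(\<lambda>(x, y). h x y) \<in> borel_measurable (borel \<Otimes>\<^sub>M borel)"
  shows "(\<integral>\<^sup>+t. \<integral>\<^sup>+q. \<integral>\<^sup>+z. h (t + z) (q + ((a\<^sup>2 * z - t) / (a * b))\<^sup>2) \<partial>normal_measure 0 1
            \<partial>chi_squared m \<partial>normal_measure 0 a)
       = (\<integral>\<^sup>+u. \<integral>\<^sup>+r. h u r \<partial>chi_squared (Suc m) \<partial>normal_measure 0 b)"
proof -
  let ?G = "\<lambda>t q. \<integral>\<^sup>+z. h (t + z) (q + ((a\<^sup>2 * z - t) / (a * b))\<^sup>2) \<partial>normal_measure 0 1"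
  have [measurable]: "(\<lambda>(t, q). ?G t q) \<in> borel_measurable (borel \<Otimes>\<^sub>M borel)"
    by (rule borel_measurable_nn_integral_std_normal) measurable
  have [measurable]: "(\<lambda>(u, q). \<integral>\<^sup>+v. h u (q + v\<^sup>2) \<partial>normal_measure 0 1) \<in> borel_measurable (borel \<Otimes>\<^sub>M borel)"
    by (rule borel_measurable_nn_integral_std_normal) measurable
  have "(\<integral>\<^sup>+t. \<integral>\<^sup>+q. ?G t q \<partial>chi_squared m \<partial>normal_measure 0 a)
      = (\<integral>\<^sup>+q. \<integral>\<^sup>+t. ?G t q \<partial>normal_measure 0 a \<partial>chi_squared m)"
    by (rule pair_sigma_finite.Fubini'[OF pair_sigma_finite_normal_chi_squared[OF a], symmetric])
       measurable
  also have "\<dots> = (\<integral>\<^sup>+q. \<integral>\<^sup>+u. \<integral>\<^sup>+v. h u (q + v\<^sup>2) \<partial>normal_measure 0 1 \<partial>normal_measure 0 b \<partial>chi_squared m)"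
    using nn_integral_normal_rotation[OF a b bb, of "\<lambda>u v. h u (_ + v\<^sup>2)"] by simp
  also have "\<dots> = (\<integral>\<^sup>+u. \<integral>\<^sup>+q. \<integral>\<^sup>+v. h u (q + v\<^sup>2) \<partial>normal_measure 0 1 \<partial>chi_squared m \<partial>normal_measure 0 b)"
    by (rule pair_sigma_finite.Fubini'[OF pair_sigma_finite_normal_chi_squared[OF b]]) measurable
  also have "\<dots> = (\<integral>\<^sup>+u. \<integral>\<^sup>+r. h u r \<partial>chi_squared (Suc m) \<partial>normal_measure 0 b)"
    by (intro nn_integral_cong nn_integral_chi_squared_Suc) measurable
  finally show ?thesis .
qed

section \<open>The standardised sum and centred sum of squares\<close>

definition std_sum :: "real \<Rightarrow> real \<Rightarrow> nat \<Rightarrow> (nat \<Rightarrow> real) \<Rightarrow> real" where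
  "std_sum \<mu> \<sigma> k x = (\<Sum>i<k. (x i - \<mu>) / \<sigma>)"

definition std_ssd :: "real \<Rightarrow> real \<Rightarrow> nat \<Rightarrow> (nat \<Rightarrow> real) \<Rightarrow> real" where
  "std_ssd \<mu> \<sigma> k x = (\<Sum>i<k. ((x i - \<mu>) / \<sigma>)\<^sup>2) - (std_sum \<mu> \<sigma> k x)\<^sup>2 / real k"

lemma std_ssd_eq_sum_sq_dev:
  assumes n: "0 < n"
  shows "std_ssd \<mu> \<sigma> n x = (\<Sum>i<n. ((x i - \<mu>) / \<sigma> - std_sum \<mu> \<sigma> n x / real n)\<^sup>2)"
proof -
  define z where "z i = (x i - \<mu>) / \<sigma>" for i
  define T where "T = std_sum \<mu> \<sigma> n x"
  have T: "T = (\<Sum>i<n. z i)" unfolding T_def std_sum_def z_def ..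
  have "(\<Sum>i<n. (z i - T / real n)\<^sup>2) = (\<Sum>i<n. (z i)\<^sup>2 - 2 * (T / real n) * z i + (T / real n)\<^sup>2)"
    by (intro sum.cong) (auto simp: power2_diff)
  also have "\<dots> = (\<Sum>i<n. (z i)\<^sup>2) - 2 * (T / real n) * (\<Sum>i<n. z i) + real n * (T / real n)\<^sup>2"
    by (simp add: sum.distrib sum_subtractf sum_distrib_left)
  also have "\<dots> = (\<Sum>i<n. (z i)\<^sup>2) - T\<^sup>2 / real n"
    unfolding T[symmetric] using n by (simp add: field_simps power2_eq_square)
  finally show ?thesis unfolding std_ssd_def z_def T_def by simp
qed

lemma std_ssd_nonneg: "0 < n \<Longrightarrow> 0 \<le> std_ssd \<mu> \<sigma> n x"
  by (simp add: std_ssd_eq_sum_sq_dev sum_nonneg)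

lemma std_sum_restrict: "std_sum \<mu> \<sigma> n (restrict x {..<n}) = std_sum \<mu> \<sigma> n x"
  unfolding std_sum_def by (intro sum.cong) auto

lemma std_ssd_restrict: "std_ssd \<mu> \<sigma> n (restrict x {..<n}) = std_ssd \<mu> \<sigma> n x"
proof -
  have "(\<Sum>i<n. ((restrict x {..<n} i - \<mu>) / \<sigma>)\<^sup>2) = (\<Sum>i<n. ((x i - \<mu>) / \<sigma>)\<^sup>2)"
    by (intro sum.cong) auto
  then show ?thesis
    unfolding std_ssd_def std_sum_restrict by simp
qed

lemma std_sum_update: "std_sum \<mu> \<sigma> (Suc k) (x(k := y)) = std_sum \<mu> \<sigma> k x + (y - \<mu>) / \<sigma>"
  unfolding std_sum_def by simp

text \<open>Helmert's recursion: a new observation increases the centred sum of squares by the square of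
  a standardised contrast between it and the previous sum.\<close>

lemma std_ssd_update:
  assumes k: "0 < k"
  shows "std_ssd \<mu> \<sigma> (Suc k) (x(k := y)) = std_ssd \<mu> \<sigma> k x
     + (((sqrt (real k))\<^sup>2 * ((y - \<mu>) / \<sigma>) - std_sum \<mu> \<sigma> k x) / (sqrt (real k) * sqrt (real (Suc k))))\<^sup>2"
proof -
  define z where "z = (y - \<mu>) / \<sigma>"
  define T where "T = std_sum \<mu> \<sigma> k x"
  define S where "S = (\<Sum>i<k. ((x i - \<mu>) / \<sigma>)\<^sup>2)"
  define K where "K = real k"
  have K: "0 < K" using k by (simp add: K_def)
  have lhs: "std_ssd \<mu> \<sigma> (Suc k) (x(k := y)) = S + z\<^sup>2 - (T + z)\<^sup>2 / (K + 1)"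
    unfolding std_ssd_def std_sum_update S_def T_def z_def K_def by simp
  have "(T + z)\<^sup>2 / (K + 1) = (K * (T + z)\<^sup>2) / (K * (K + 1))"
    using K by simp
  also have "K * (T + z)\<^sup>2 = (K + 1) * T\<^sup>2 + K * (K + 1) * z\<^sup>2 - (K * z - T)\<^sup>2"
    by (simp add: algebra_simps power2_eq_square)
  also have "\<dots> / (K * (K + 1)) = T\<^sup>2 / K + z\<^sup>2 - (K * z - T)\<^sup>2 / (K * (K + 1))"
    using K by (simp add: diff_divide_distrib add_divide_distrib)
  finally have "S + z\<^sup>2 - (T + z)\<^sup>2 / (K + 1) = S - T\<^sup>2 / K + (K * z - T)\<^sup>2 / (K * (K + 1))"
    by simp
  also have "(K * z - T)\<^sup>2 / (K * (K + 1))
      = (((sqrt (real k))\<^sup>2 * z - T) / (sqrt (real k) * sqrt (real (Suc k))))\<^sup>2"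
    using K by (simp add: K_def power_divide power_mult_distrib)
  also have "S - T\<^sup>2 / K = std_ssd \<mu> \<sigma> k x"
    unfolding std_ssd_def S_def T_def K_def ..
  finally show ?thesis
    unfolding lhs z_def T_def .
qed

lemma borel_measurable_std_sum[measurable]:
  "k \<le> m \<Longrightarrow> std_sum \<mu> \<sigma> k \<in> borel_measurable (PiM {..<m} (\<lambda>_. normal_measure \<mu>' \<sigma>'))"
  unfolding std_sum_def[abs_def] by measurable

lemma borel_measurable_std_ssd[measurable]:
  "k \<le> m \<Longrightarrow> std_ssd \<mu> \<sigma> k \<in> borel_measurable (PiM {..<m} (\<lambda>_. normal_measure \<mu>' \<sigma>'))"
  unfolding std_ssd_def[abs_def] by measurable

lemma nn_integral_std_stats_Suc:
  assumes s: "0 < \<sigma>" and k: "0 < k" and [measurable]: "(\<lambda>(x, y). h x y) \<in> borel_measurable (borel \<Otimes>\<^sub>M borel)"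
  shows "(\<integral>\<^sup>+x. h (std_sum \<mu> \<sigma> (Suc k) x) (std_ssd \<mu> \<sigma> (Suc k) x) \<partial>PiM {..<Suc k} (\<lambda>_. normal_measure \<mu> \<sigma>))
       = (\<integral>\<^sup>+x. \<integral>\<^sup>+z. h (std_sum \<mu> \<sigma> k x + z) (std_ssd \<mu> \<sigma> k x
            + (((sqrt (real k))\<^sup>2 * z - std_sum \<mu> \<sigma> k x) / (sqrt (real k) * sqrt (real (Suc k))))\<^sup>2)
            \<partial>normal_measure 0 1 \<partial>PiM {..<k} (\<lambda>_. normal_measure \<mu> \<sigma>))"
proof -
  interpret product_sigma_finite "\<lambda>_. normal_measure \<mu> \<sigma>"
    unfolding product_sigma_finite_def using s by (auto intro: sigma_finite_normal_measure)
  have "(\<integral>\<^sup>+x. h (std_sum \<mu> \<sigma> (Suc k) x) (std_ssd \<mu> \<sigma> (Suc k) x) \<partial>PiM {..<Suc k} (\<lambda>_. normal_measure \<mu> \<sigma>))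
      = (\<integral>\<^sup>+x. \<integral>\<^sup>+y. h (std_sum \<mu> \<sigma> (Suc k) (x(k := y))) (std_ssd \<mu> \<sigma> (Suc k) (x(k := y)))
          \<partial>normal_measure \<mu> \<sigma> \<partial>PiM {..<k} (\<lambda>_. normal_measure \<mu> \<sigma>))"
    unfolding lessThan_Suc by (rule product_nn_integral_insert) (auto simp flip: lessThan_Suc)
  also have "\<dots> = (\<integral>\<^sup>+x. \<integral>\<^sup>+y. (\<lambda>z. h (std_sum \<mu> \<sigma> k x + z) (std_ssd \<mu> \<sigma> k x
            + (((sqrt (real k))\<^sup>2 * z - std_sum \<mu> \<sigma> k x) / (sqrt (real k) * sqrt (real (Suc k))))\<^sup>2))
            ((y - \<mu>) / \<sigma>) \<partial>normal_measure \<mu> \<sigma> \<partial>PiM {..<k} (\<lambda>_. normal_measure \<mu> \<sigma>))"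
    unfolding std_sum_update std_ssd_update[OF k] ..
  also have "\<dots> = (\<integral>\<^sup>+x. \<integral>\<^sup>+z. h (std_sum \<mu> \<sigma> k x + z) (std_ssd \<mu> \<sigma> k x
            + (((sqrt (real k))\<^sup>2 * z - std_sum \<mu> \<sigma> k x) / (sqrt (real k) * sqrt (real (Suc k))))\<^sup>2)
            \<partial>normal_measure 0 1 \<partial>PiM {..<k} (\<lambda>_. normal_measure \<mu> \<sigma>))"
    by (intro nn_integral_cong nn_integral_normal_measure_standardize[OF s]) measurable
  finally show ?thesis .
qed

lemma nn_integral_std_sum_ssd:
  assumes s: "0 < \<sigma>" and h: "(\<lambda>(x, y). h x y) \<in> borel_measurable (borel \<Otimes>\<^sub>M borel)"
  shows "(\<integral>\<^sup>+x. h (std_sum \<mu> \<sigma> (Suc j) x) (std_ssd \<mu> \<sigma> (Suc j) x) \<partial>PiM {..<Suc j} (\<lambda>_. normal_measure \<mu> \<sigma>))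
       = (\<integral>\<^sup>+t. \<integral>\<^sup>+q. h t q \<partial>chi_squared j \<partial>normal_measure 0 (sqrt (real (Suc j))))"
  using h
proof (induction j arbitrary: h)
  case 0
  note [measurable] = 0
  interpret product_sigma_finite "\<lambda>_. normal_measure \<mu> \<sigma>"
    unfolding product_sigma_finite_def using s by (auto intro: sigma_finite_normal_measure)
  have "(\<integral>\<^sup>+x. h (std_sum \<mu> \<sigma> (Suc 0) x) (std_ssd \<mu> \<sigma> (Suc 0) x) \<partial>PiM {..<Suc 0} (\<lambda>_. normal_measure \<mu> \<sigma>))
      = (\<integral>\<^sup>+x. h ((x 0 - \<mu>) / \<sigma>) 0 \<partial>PiM {0::nat} (\<lambda>_. normal_measure \<mu> \<sigma>))"
    by (simp add: lessThan_Suc std_sum_def std_ssd_def)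
  also have "\<dots> = (\<integral>\<^sup>+y. h ((y - \<mu>) / \<sigma>) 0 \<partial>normal_measure \<mu> \<sigma>)"
    using product_nn_integral_singleton[of "\<lambda>y. h ((y - \<mu>) / \<sigma>) 0" 0] by simp
  also have "\<dots> = (\<integral>\<^sup>+z. h z 0 \<partial>normal_measure 0 1)"
    by (rule nn_integral_normal_measure_standardize[OF s]) measurable
  finally show ?case
    by (simp add: chi_squared_def nn_integral_return)
next
  case (Suc j)
  note [measurable] = Suc.prems
  define a where "a = sqrt (real (Suc j))"
  define b where "b = sqrt (real (Suc (Suc j)))"
  have a: "0 < a" and b: "0 < b" and bb: "b\<^sup>2 = a\<^sup>2 + 1"
    by (simp_all add: a_def b_def)
  define G where "G t q = (\<integral>\<^sup>+z. h (t + z) (q + ((a\<^sup>2 * z - t) / (a * b))\<^sup>2) \<partial>normal_measure 0 1)" for t q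
  have [measurable]: "(\<lambda>(t, q). G t q) \<in> borel_measurable (borel \<Otimes>\<^sub>M borel)"
    unfolding G_def by (rule borel_measurable_nn_integral_std_normal) measurable
  have "(\<integral>\<^sup>+x. h (std_sum \<mu> \<sigma> (Suc (Suc j)) x) (std_ssd \<mu> \<sigma> (Suc (Suc j)) x)
          \<partial>PiM {..<Suc (Suc j)} (\<lambda>_. normal_measure \<mu> \<sigma>))
      = (\<integral>\<^sup>+x. G (std_sum \<mu> \<sigma> (Suc j) x) (std_ssd \<mu> \<sigma> (Suc j) x) \<partial>PiM {..<Suc j} (\<lambda>_. normal_measure \<mu> \<sigma>))"
    unfolding nn_integral_std_stats_Suc[OF s zero_less_Suc Suc.prems] G_def a_def b_def ..
  also have "\<dots> = (\<integral>\<^sup>+t. \<integral>\<^sup>+q. G t q \<partial>chi_squared j \<partial>normal_measure 0 a)"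
    unfolding a_def by (rule Suc.IH) measurable
  also have "\<dots> = (\<integral>\<^sup>+u. \<integral>\<^sup>+r. h u r \<partial>chi_squared (Suc j) \<partial>normal_measure 0 b)"
    unfolding G_def by (rule nn_integral_normal_chi_squared_step[OF a b bb]) measurable
  finally show ?case
    unfolding b_def .
qed

lemma sample_mean_eq_std_sum:
  assumes n: "0 < n" and s: "0 < \<sigma>"
  shows "sample_mean X n \<omega> = \<mu> + \<sigma> * std_sum \<mu> \<sigma> n (\<lambda>i. X i \<omega>) / real n"
proof -
  have "(\<Sum>i<n. X i \<omega>) = (\<Sum>i<n. \<mu> + \<sigma> * ((X i \<omega> - \<mu>) / \<sigma>))"
    using s by simp
  also have "\<dots> = real n * \<mu> + \<sigma> * std_sum \<mu> \<sigma> n (\<lambda>i. X i \<omega>)"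
    by (simp add: sum.distrib sum_distrib_left std_sum_def)
  finally show ?thesis
    unfolding sample_mean_def using n by (simp add: field_simps)
qed

lemma sample_var_eq_std_ssd:
  assumes n: "0 < n" and s: "0 < \<sigma>"
  shows "sample_var X n \<omega> = \<sigma>\<^sup>2 * std_ssd \<mu> \<sigma> n (\<lambda>i. X i \<omega>) / (real n - 1)"
proof -
  let ?T = "std_sum \<mu> \<sigma> n (\<lambda>i. X i \<omega>)"
  have "X i \<omega> - sample_mean X n \<omega> = \<sigma> * ((X i \<omega> - \<mu>) / \<sigma> - ?T / real n)" for i
    using s unfolding sample_mean_eq_std_sum[OF n s, where \<mu> = \<mu>] by (simp add: field_simps)
  then have "(\<Sum>i<n. (X i \<omega> - sample_mean X n \<omega>)\<^sup>2) = \<sigma>\<^sup>2 * (\<Sum>i<n. ((X i \<omega> - \<mu>) / \<sigma> - ?T / real n)\<^sup>2)"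
    by (simp add: power_mult_distrib sum_distrib_left)
  then show ?thesis
    unfolding sample_var_def std_ssd_eq_sum_sq_dev[OF n] by simp
qed

lemma U_stat_eq_std_stats:
  assumes n: "2 \<le> n" and s: "0 < \<sigma>"
  shows "U_stat X n \<mu> \<omega> = real n * ln (1 + (std_sum \<mu> \<sigma> n (\<lambda>i\<in>{..<n}. X i \<omega>))\<^sup>2
           / (real n * std_ssd \<mu> \<sigma> n (\<lambda>i\<in>{..<n}. X i \<omega>)))"
proof -
  let ?T = "std_sum \<mu> \<sigma> n (\<lambda>i. X i \<omega>)"
  let ?Q = "std_ssd \<mu> \<sigma> n (\<lambda>i. X i \<omega>)"
  have n0: "0 < n" and rn: "1 < real n"
    using n by auto
  have Q: "0 \<le> ?Q"
    using n0 by (rule std_ssd_nonneg)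
  have t2: "(t_stat X n \<mu> \<omega>)\<^sup>2 = real n * (\<sigma> * ?T / real n)\<^sup>2 / (\<sigma>\<^sup>2 * ?Q / (real n - 1))"
    unfolding t_stat_def sample_mean_eq_std_sum[OF n0 s, where \<mu> = \<mu>]
      sample_var_eq_std_ssd[OF n0 s, where \<mu> = \<mu>]
    using Q rn by (simp add: power_divide power_mult_distrib)
  have "(t_stat X n \<mu> \<omega>)\<^sup>2 / (real n - 1) = ?T\<^sup>2 / (real n * ?Q)"
    unfolding t2 using s rn by (cases "?Q = 0") (simp_all add: field_simps power2_eq_square)
  then show ?thesis
    unfolding U_stat_def std_sum_restrict std_ssd_restrict
    by (simp add: restrict_def[symmetric])
qed

lemma iid_normal_distr_PiM:
  assumes iid: "iid_normal M X n \<mu> \<sigma>" and n: "0 < n"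
  shows "(\<lambda>\<omega>. \<lambda>i\<in>{..<n}. X i \<omega>) \<in> measurable M (PiM {..<n} (\<lambda>_. normal_measure \<mu> \<sigma>))"
    and "distr M (PiM {..<n} (\<lambda>_. normal_measure \<mu> \<sigma>)) (\<lambda>\<omega>. \<lambda>i\<in>{..<n}. X i \<omega>)
           = PiM {..<n} (\<lambda>_. normal_measure \<mu> \<sigma>)"
proof -
  interpret prob_space M
    using iid by (simp add: iid_normal_def)
  have X: "distributed M lborel (X i) (\<lambda>x. ennreal (normal_density \<mu> \<sigma> x))" if "i < n" for i
    using iid that by (simp add: iid_normal_def)
  have rv[measurable]: "X i \<in> borel_measurable M" if "i < n" for i
    using X[OF that] by (simp add: distributed_def measurable_def)
  have distr_X: "distr M borel (X i) = normal_measure \<mu> \<sigma>" if "i < n" for i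
  proof -
    have "distr M borel (X i) = distr M lborel (X i)" by (rule distr_cong) auto
    then show ?thesis
      using X[OF that] by (simp add: distributed_def normal_measure_def)
  qed
  have "measurable M (normal_measure \<mu> \<sigma>) = measurable M borel"
    by (rule measurable_cong_sets) auto
  then show "(\<lambda>\<omega>. \<lambda>i\<in>{..<n}. X i \<omega>) \<in> measurable M (PiM {..<n} (\<lambda>_. normal_measure \<mu> \<sigma>))"
    by (intro measurable_restrict) auto
  have "distr M (PiM {..<n} (\<lambda>_. normal_measure \<mu> \<sigma>)) (\<lambda>\<omega>. \<lambda>i\<in>{..<n}. X i \<omega>)
      = distr M (PiM {..<n} (\<lambda>_. borel)) (\<lambda>\<omega>. \<lambda>i\<in>{..<n}. X i \<omega>)"
    by (rule distr_cong) (auto intro!: sets_PiM_cong)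
  also have "\<dots> = PiM {..<n} (\<lambda>i. distr M borel (X i))"
  proof -
    have "indep_vars (\<lambda>_. borel) X {..<n}"
      using iid by (simp add: iid_normal_def)
    then show ?thesis
      using n by (subst (asm) indep_vars_iff_distr_eq_PiM') (auto intro: rv)
  qed
  also have "\<dots> = PiM {..<n} (\<lambda>_. normal_measure \<mu> \<sigma>)"
    by (rule PiM_cong) (auto simp: distr_X)
  finally show "distr M (PiM {..<n} (\<lambda>_. normal_measure \<mu> \<sigma>)) (\<lambda>\<omega>. \<lambda>i\<in>{..<n}. X i \<omega>)
      = PiM {..<n} (\<lambda>_. normal_measure \<mu> \<sigma>)" .
qed

section \<open>The beta prime law and its logarithmic moments\<close>

definition beta_prime_kernel :: "real \<Rightarrow> real \<Rightarrow> real \<Rightarrow> real" where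
  "beta_prime_kernel b c w = (if 0 < w then w powr (b - 1) * (1 + w) powr (- c) else 0)"

lemma beta_prime_kernel_nonneg: "0 \<le> beta_prime_kernel b c w"
  unfolding beta_prime_kernel_def by auto

lemma borel_measurable_beta_prime_kernel[measurable]: "beta_prime_kernel b c \<in> borel_measurable borel"
  unfolding beta_prime_kernel_def by measurable

lemma Beta_real_pos: "0 < a \<Longrightarrow> 0 < b \<Longrightarrow> 0 < Beta a (b::real)"
  unfolding Beta_def by simp

lemma gamma2_density_ratio_integrand:
  fixes a b q w :: real
  assumes w: "0 < w"
  shows "gamma2_density a q * q * gamma2_density b (q * w)
       = w powr (b - 1) / (2 powr a * Gamma a * (2 powr b * Gamma b))
         * (indicator {0<..} q * q powr (a + b - 1) * exp (- ((1 + w) / 2 * q)))"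
proof (cases "0 < q")
  case True
  have "q powr (a - 1) * q * q powr (b - 1) = q powr (a - 1) * q powr 1 * q powr (b - 1)"
    using True by simp
  also have "\<dots> = q powr ((a - 1) + 1 + (b - 1))"
    by (simp only: powr_add)
  also have "(a - 1) + 1 + (b - 1) = a + b - 1"
    by simp
  finally have e: "q powr (a - 1) * q * q powr (b - 1) = q powr (a + b - 1)" .
  have "gamma2_density a q * q * gamma2_density b (q * w)
      = (q powr (a - 1) * q * q powr (b - 1)) * w powr (b - 1) * (exp (- q / 2) * exp (- (q * w) / 2))
        / (2 powr a * Gamma a * (2 powr b * Gamma b))"
    using True w unfolding gamma2_density_def by (simp add: powr_mult field_simps)
  then show ?thesis
    unfolding e using True by (simp add: exp_add[symmetric] field_simps)
qed (simp add: gamma2_density_def)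

lemma nn_integral_gamma2_ratio_density:
  fixes a b w :: real
  assumes a: "0 < a" and b: "0 < b"
  shows "(\<integral>\<^sup>+q. ennreal (gamma2_density a q * q * gamma2_density b (q * w)) \<partial>lborel)
       = ennreal (beta_prime_kernel b (a + b) w / Beta a b)"
proof (cases "0 < w")
  case False
  have "gamma2_density a q * q * gamma2_density b (q * w) = 0" for q
    using False mult_pos_neg[of q w] by (cases "0 < q") (auto simp: gamma2_density_def)
  then show ?thesis
    using False by (simp only: ennreal_0 nn_integral_const mult_zero_left) (simp add: beta_prime_kernel_def)
next
  case w: True
  define C where "C = w powr (b - 1) / (2 powr a * Gamma a * (2 powr b * Gamma b))"
  have ga: "0 < Gamma a" "0 < Gamma b" "0 < Gamma (a + b)" using a b by auto
  have C: "0 \<le> C" unfolding C_def using ga by simp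
  have "(\<integral>\<^sup>+q. ennreal (gamma2_density a q * q * gamma2_density b (q * w)) \<partial>lborel)
      = ennreal C * (\<integral>\<^sup>+q. ennreal (indicator {0<..} q * q powr (a + b - 1) * exp (- ((1 + w) / 2 * q))) \<partial>lborel)"
    unfolding gamma2_density_ratio_integrand[OF w] C_def[symmetric]
    using C by (subst nn_integral_cmult[symmetric]) (auto simp: ennreal_mult')
  also have "\<dots> = ennreal C * ennreal (Gamma (a + b) / ((1 + w) / 2) powr (a + b))"
    using nn_integral_powr_exp_scaled[of "a + b" "(1 + w) / 2"] a b w by simp
  also have "\<dots> = ennreal (C * (Gamma (a + b) / ((1 + w) / 2) powr (a + b)))"
    using C by (rule ennreal_mult'[symmetric])
  also have "C * (Gamma (a + b) / ((1 + w) / 2) powr (a + b)) = beta_prime_kernel b (a + b) w / Beta a b"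
  proof -
    have "((1 + w) / 2) powr (a + b) = (1 + w) powr (a + b) / 2 powr (a + b)"
      using w by (simp add: powr_divide)
    moreover have "(1 + w) powr (- (a + b)) = 1 / (1 + w) powr (a + b)"
      by (rule powr_minus_divide)
    moreover have "(2::real) powr (a + b) = 2 powr a * 2 powr b" by (simp add: powr_add)
    moreover have "0 < (1 + w) powr (a + b)" using w by simp
    ultimately show ?thesis
      unfolding C_def beta_prime_kernel_def Beta_def using w ga by (simp add: field_simps)
  qed
  finally show ?thesis .
qed

lemma nn_integral_gamma2_ratio:
  fixes a b :: real
  assumes a: "0 < a" and b: "0 < b" and [measurable]: "F \<in> borel_measurable borel"
  shows "(\<integral>\<^sup>+q. \<integral>\<^sup>+y. F (y / q) \<partial>density lborel (\<lambda>x. ennreal (gamma2_density b x))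
            \<partial>density lborel (\<lambda>x. ennreal (gamma2_density a x)))
       = (\<integral>\<^sup>+w. ennreal (beta_prime_kernel b (a + b) w / Beta a b) * F w \<partial>lborel)"
proof -
  have inner: "(\<integral>\<^sup>+y. F (y / q) \<partial>density lborel (\<lambda>x. ennreal (gamma2_density b x)))
      = (\<integral>\<^sup>+y. ennreal (gamma2_density b y) * F (y / q) \<partial>lborel)" for q
    by (rule nn_integral_density) measurable
  have "(\<integral>\<^sup>+q. \<integral>\<^sup>+y. F (y / q) \<partial>density lborel (\<lambda>x. ennreal (gamma2_density b x))
            \<partial>density lborel (\<lambda>x. ennreal (gamma2_density a x)))
      = (\<integral>\<^sup>+q. ennreal (gamma2_density a q) * (\<integral>\<^sup>+y. ennreal (gamma2_density b y) * F (y / q) \<partial>lborel) \<partial>lborel)"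
    unfolding inner by (rule nn_integral_density) measurable
  also have "\<dots> = (\<integral>\<^sup>+q. \<integral>\<^sup>+w. ennreal (gamma2_density a q * q * gamma2_density b (q * w)) * F w \<partial>lborel \<partial>lborel)"
  proof (rule nn_integral_cong)
    fix q :: real
    show "ennreal (gamma2_density a q) * (\<integral>\<^sup>+y. ennreal (gamma2_density b y) * F (y / q) \<partial>lborel)
        = (\<integral>\<^sup>+w. ennreal (gamma2_density a q * q * gamma2_density b (q * w)) * F w \<partial>lborel)"
    proof (cases "0 < q")
      case True
      have "(\<integral>\<^sup>+y. ennreal (gamma2_density b y) * F (y / q) \<partial>lborel)
          = ennreal \<bar>q\<bar> * (\<integral>\<^sup>+w. ennreal (gamma2_density b (0 + q * w)) * F ((0 + q * w) / q) \<partial>lborel)"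
        using True by (intro nn_integral_real_affine) auto
      then have "ennreal (gamma2_density a q) * (\<integral>\<^sup>+y. ennreal (gamma2_density b y) * F (y / q) \<partial>lborel)
          = (\<integral>\<^sup>+w. ennreal (gamma2_density a q) * ennreal q * (ennreal (gamma2_density b (q * w)) * F w) \<partial>lborel)"
        using True by (simp add: nn_integral_cmult[symmetric] mult.assoc)
      also have "\<dots> = (\<integral>\<^sup>+w. ennreal (gamma2_density a q * q * gamma2_density b (q * w)) * F w \<partial>lborel)"
        using True a b by (intro nn_integral_cong) (simp add: ennreal_mult' gamma2_density_nonneg mult.assoc)
      finally show ?thesis .
    qed (simp add: gamma2_density_def)
  qed
  also have "\<dots> = (\<integral>\<^sup>+w. \<integral>\<^sup>+q. ennreal (gamma2_density a q * q * gamma2_density b (q * w)) * F w \<partial>lborel \<partial>lborel)"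
    by (rule lborel_pair.Fubini'[symmetric]) measurable
  also have "\<dots> = (\<integral>\<^sup>+w. (\<integral>\<^sup>+q. ennreal (gamma2_density a q * q * gamma2_density b (q * w)) \<partial>lborel) * F w \<partial>lborel)"
    by (rule nn_integral_cong) (rule nn_integral_multc, measurable)
  also have "\<dots> = (\<integral>\<^sup>+w. ennreal (beta_prime_kernel b (a + b) w / Beta a b) * F w \<partial>lborel)"
    by (simp add: nn_integral_gamma2_ratio_density[OF a b])
  finally show ?thesis .
qed

lemma nn_integral_std_ratio:
  assumes n: "2 \<le> n" and s: "0 < \<sigma>" and [measurable]: "g \<in> borel_measurable borel"
  shows "(\<integral>\<^sup>+x. g ((std_sum \<mu> \<sigma> n x)\<^sup>2 / (real n * std_ssd \<mu> \<sigma> n x)) \<partial>PiM {..<n} (\<lambda>_. normal_measure \<mu> \<sigma>))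
       = (\<integral>\<^sup>+w. ennreal (beta_prime_kernel (1/2) (real n / 2) w / Beta ((real n - 1) / 2) (1/2)) * g w \<partial>lborel)"
proof -
  obtain j where j: "n = Suc j" and j0: "j \<noteq> 0"
    using n by (cases n) auto
  have sn: "0 < sqrt (real n)"
    using n by simp
  have "(\<integral>\<^sup>+x. g ((std_sum \<mu> \<sigma> n x)\<^sup>2 / (real n * std_ssd \<mu> \<sigma> n x)) \<partial>PiM {..<n} (\<lambda>_. normal_measure \<mu> \<sigma>))
      = (\<integral>\<^sup>+t. \<integral>\<^sup>+q. g (t\<^sup>2 / (real n * q)) \<partial>chi_squared j \<partial>normal_measure 0 (sqrt (real n)))"
    unfolding j by (rule nn_integral_std_sum_ssd[OF s]) measurable
  also have "\<dots> = (\<integral>\<^sup>+q. \<integral>\<^sup>+t. g (t\<^sup>2 / (real n * q)) \<partial>normal_measure 0 (sqrt (real n)) \<partial>chi_squared j)"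
    by (rule pair_sigma_finite.Fubini'[OF pair_sigma_finite_normal_chi_squared[OF sn], symmetric])
       measurable
  also have "\<dots> = (\<integral>\<^sup>+q. \<integral>\<^sup>+v. g (v\<^sup>2 / q) \<partial>normal_measure 0 1 \<partial>chi_squared j)"
    using n by (intro nn_integral_cong)
      (simp add: nn_integral_normal_measure_scale[OF sn] power_mult_distrib)
  also have "\<dots> = (\<integral>\<^sup>+q. \<integral>\<^sup>+y. g (y / q) \<partial>chi_squared 1 \<partial>chi_squared j)"
    by (intro nn_integral_cong nn_integral_square_std_normal) measurable
  also have "\<dots> = (\<integral>\<^sup>+w. ennreal (beta_prime_kernel (1/2) ((real n - 1) / 2 + 1/2) w
      / Beta ((real n - 1) / 2) (1/2)) * g w \<partial>lborel)"
    using j j0 nn_integral_gamma2_ratio[of "(real n - 1) / 2" "1/2" g]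
    by (simp add: chi_squared_def)
  finally show ?thesis
    by (simp add: field_simps)
qed

lemma nn_integral_beta_prime_kernel:
  assumes b: "0 < b" and c: "b < c"
  shows "(\<integral>\<^sup>+w. ennreal (beta_prime_kernel b c w) \<partial>lborel) = ennreal (Beta (c - b) b)"
proof -
  define a where "a = c - b"
  have a: "0 < a" and c: "c = a + b"
    using c by (simp_all add: a_def)
  interpret A: prob_space "density lborel (\<lambda>x. ennreal (gamma2_density a x))"
    by (rule prob_space_gamma2_density[OF a])
  interpret B: prob_space "density lborel (\<lambda>x. ennreal (gamma2_density b x))"
    by (rule prob_space_gamma2_density[OF b])
  have "(\<integral>\<^sup>+w. ennreal (beta_prime_kernel b c w / Beta a b) \<partial>lborel) = 1"
    using nn_integral_gamma2_ratio[OF a b, of "\<lambda>_. 1"] A.emeasure_space_1 B.emeasure_space_1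
    unfolding c by simp
  then have "ennreal (Beta a b) * (\<integral>\<^sup>+w. ennreal (beta_prime_kernel b c w / Beta a b) \<partial>lborel) = ennreal (Beta a b)"
    by simp
  then show ?thesis
    using Beta_real_pos[OF a b]
    by (simp add: a_def nn_integral_cmult[symmetric] ennreal_mult'[symmetric] beta_prime_kernel_nonneg)
qed

lemma integrable_beta_prime_kernel: "0 < b \<Longrightarrow> b < c \<Longrightarrow> integrable lborel (beta_prime_kernel b c)"
  by (rule integrableI_nn_integral_finite[OF _ _ nn_integral_beta_prime_kernel])
     (auto simp: beta_prime_kernel_nonneg)

definition log_moment :: "real \<Rightarrow> real \<Rightarrow> nat \<Rightarrow> real" where
  "log_moment b c p = (\<integral>w. ln (1 + w) ^ p * beta_prime_kernel b c w \<partial>lborel)"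

lemma integrable_ln_power_beta_prime_kernel:
  assumes b: "0 < b" and c: "b < c"
  shows "integrable lborel (\<lambda>w. ln (1 + w) ^ p * beta_prime_kernel b c w)"
proof (cases "p = 0")
  case True
  then show ?thesis using integrable_beta_prime_kernel[OF b c] by simp
next
  case False
  define d where "d = (c - b) / (2 * real p)"
  have d: "0 < d" using False c by (simp add: d_def)
  define c' where "c' = c - real p * d"
  have c': "b < c'" using False c unfolding c'_def d_def by (simp add: field_simps)
  \<comment> \<open>\<open>ln (1 + w) ^ p \<le> (1 + w) powr (p * d) / d ^ p\<close> trades the logarithm for part of the decay.\<close>
  show ?thesis
  proof (rule Bochner_Integration.integrable_bound[OF integrable_mult_right[OF integrable_beta_prime_kernel[OF b c'], of "1 / d ^ p"]])
    show "AE w in lborel. norm (ln (1 + w) ^ p * beta_prime_kernel b c w) \<le> norm (1 / d ^ p * beta_prime_kernel b c' w)"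
    proof (rule AE_I2)
      fix w :: real
      show "norm (ln (1 + w) ^ p * beta_prime_kernel b c w) \<le> norm (1 / d ^ p * beta_prime_kernel b c' w)"
      proof (cases "0 < w")
        case True
        have l0: "0 \<le> ln (1 + w)" using True by simp
        have "ln (1 + w) ^ p \<le> ((1 + w) powr d / d) ^ p"
          using ln_powr_bound[of "1 + w" d] True d l0 by (intro power_mono) auto
        also have "\<dots> = (1 + w) powr (real p * d) / d ^ p"
          using True by (simp add: power_divide powr_power)
        finally have "ln (1 + w) ^ p * beta_prime_kernel b c w
            \<le> (1 + w) powr (real p * d) / d ^ p * beta_prime_kernel b c w"
          using beta_prime_kernel_nonneg by (rule mult_right_mono)
        also have "\<dots> = 1 / d ^ p * beta_prime_kernel b c' w"
          using True unfolding beta_prime_kernel_def c'_def by (simp add: powr_add[symmetric] field_simps)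
        finally show ?thesis
          using l0 beta_prime_kernel_nonneg[of b c w] beta_prime_kernel_nonneg[of b c' w] d by simp
      qed (simp add: beta_prime_kernel_def)
    qed
  qed measurable
qed

lemma log_moment_0:
  assumes b: "0 < b" and c: "b < c"
  shows "log_moment b c 0 = Beta (c - b) b"
proof -
  have "integrable lborel (beta_prime_kernel b c) \<and> integral\<^sup>L lborel (beta_prime_kernel b c) = Beta (c - b) b"
    using nn_integral_beta_prime_kernel[OF b c] Beta_real_pos[of "c - b" b] b c
    by (subst nn_integral_eq_integrable[symmetric]) (auto simp: beta_prime_kernel_nonneg)
  then show ?thesis unfolding log_moment_def by simp
qed

lemma log_moment_nonneg: "0 \<le> log_moment b c p"
  unfolding log_moment_def by (intro Bochner_Integration.integral_nonneg) (auto simp: beta_prime_kernel_def)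

text \<open>By convexity of \<open>c \<mapsto> (1 + w) powr (- c)\<close>, each logarithmic moment lies above its tangent
  line.\<close>

lemma ln_power_beta_prime_kernel_tangent:
  "ln (1 + w) ^ p * beta_prime_kernel b c0 w - (c - c0) * (ln (1 + w) ^ Suc p * beta_prime_kernel b c0 w)
     \<le> ln (1 + w) ^ p * beta_prime_kernel b c w"
proof (cases "0 < w")
  case True
  define L where "L = ln (1 + w)"
  have L: "0 \<le> L" using True by (simp add: L_def)
  have e: "(1 + w) powr (- x) = exp (- (x * L))" for x
    using True by (simp add: powr_def L_def)
  have "exp (- (c0 * L)) * (1 + (- ((c - c0) * L))) \<le> exp (- (c0 * L)) * exp (- ((c - c0) * L))"
    by (intro mult_left_mono exp_ge_add_one_self) simp
  also have "\<dots> = exp (- (c * L))"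
    by (simp add: exp_add[symmetric] algebra_simps)
  finally have "L ^ p * w powr (b - 1) * (exp (- (c0 * L)) - (c - c0) * L * exp (- (c0 * L)))
      \<le> L ^ p * w powr (b - 1) * exp (- (c * L))"
    using L by (intro mult_left_mono) (auto simp: algebra_simps)
  then show ?thesis
    using True unfolding beta_prime_kernel_def e L_def[symmetric] by (simp add: algebra_simps)
qed (simp add: beta_prime_kernel_def)

lemma log_moment_tangent:
  assumes b: "0 < b" and c: "b < c" and c0: "b < c0"
  shows "log_moment b c0 p - (c - c0) * log_moment b c0 (Suc p) \<le> log_moment b c p"
proof -
  have i1: "integrable lborel (\<lambda>w. ln (1 + w) ^ p * beta_prime_kernel b c0 w)"
    by (rule integrable_ln_power_beta_prime_kernel[OF b c0])
  have i2: "integrable lborel (\<lambda>w. (c - c0) * (ln (1 + w) ^ Suc p * beta_prime_kernel b c0 w))"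
    by (rule integrable_mult_right) (rule integrable_ln_power_beta_prime_kernel[OF b c0])
  have "log_moment b c0 p - (c - c0) * log_moment b c0 (Suc p)
      = (\<integral>w. ln (1 + w) ^ p * beta_prime_kernel b c0 w
            - (c - c0) * (ln (1 + w) ^ Suc p * beta_prime_kernel b c0 w) \<partial>lborel)"
    unfolding log_moment_def Bochner_Integration.integral_diff[OF i1 i2] by simp
  also have "\<dots> \<le> log_moment b c p"
    unfolding log_moment_def
    by (rule integral_mono[OF Bochner_Integration.integrable_diff[OF i1 i2]
          integrable_ln_power_beta_prime_kernel[OF b c] ln_power_beta_prime_kernel_tangent])
  finally show ?thesis .
qed

lemma DERIV_eq_supporting_slope:
  fixes f :: "real \<Rightarrow> real"
  assumes D: "(f has_real_derivative D) (at c)" and d: "0 < d"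
    and above: "\<And>y. \<bar>c - y\<bar> < d \<Longrightarrow> f c + (y - c) * L \<le> f y"
  shows "D = L"
proof -
  have "((\<lambda>y. f y - (y - c) * L) has_real_derivative D - L) (at c)"
    using D by (auto intro!: derivative_eq_intros)
  then have "D - L = 0"
    by (rule DERIV_local_min[OF _ d]) (use above in \<open>auto simp: algebra_simps\<close>)
  then show ?thesis by simp
qed

lemma has_real_derivative_Beta_shift:
  assumes b: "0 < b" and c: "b < c"
  shows "((\<lambda>y. Beta (y - b) b) has_real_derivative Beta (c - b) b * (Digamma (c - b) - Digamma c)) (at c)"
proof -
  have "c - b \<notin> \<int>\<^sub>\<le>\<^sub>0" "c - b + b \<notin> \<int>\<^sub>\<le>\<^sub>0"
    using b c by auto
  from DERIV_chain2[OF has_field_derivative_Beta1[OF this] DERIV_diff[OF DERIV_ident DERIV_const]]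
  show ?thesis
    by simp
qed

lemma has_real_derivative_Digamma:
  assumes "0 < x"
  shows "(Digamma has_real_derivative Polygamma 1 x) (at x)"
proof -
  have "x \<notin> \<int>\<^sub>\<le>\<^sub>0"
    using assms by auto
  then show ?thesis
    using has_field_derivative_Polygamma[of x 0 UNIV] by simp
qed

lemma log_moment_1:
  assumes b: "0 < b" and c: "b < c"
  shows "log_moment b c 1 = Beta (c - b) b * (Digamma c - Digamma (c - b))"
proof -
  have "Beta (c - b) b * (Digamma (c - b) - Digamma c) = - log_moment b c 1"
  proof (rule DERIV_eq_supporting_slope[OF has_real_derivative_Beta_shift[OF b c]])
    show "0 < c - b" using c by simp
    fix y assume "\<bar>c - y\<bar> < c - b"
    then have "b < y" by linarith
    then show "Beta (c - b) b + (y - c) * - log_moment b c 1 \<le> Beta (y - b) b"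
      using log_moment_tangent[OF b \<open>b < y\<close> c, of 0] log_moment_0[OF b c] log_moment_0[OF b \<open>b < y\<close>]
      by simp
  qed
  then show ?thesis by (simp add: algebra_simps)
qed

lemma log_moment_2:
  assumes b: "0 < b" and c: "b < c"
  shows "log_moment b c 2
       = Beta (c - b) b * ((Digamma c - Digamma (c - b))\<^sup>2 + Polygamma 1 (c - b) - Polygamma 1 c)"
proof -
  have dDigamma: "((\<lambda>y. Digamma y - Digamma (y - b)) has_real_derivative Polygamma 1 c - Polygamma 1 (c - b)) (at c)"
    using b c by (auto intro!: derivative_eq_intros has_real_derivative_Digamma[THEN DERIV_chain2])
  note dI1 = DERIV_mult[OF has_real_derivative_Beta_shift[OF b c] dDigamma]
  have "Beta (c - b) b * (Digamma (c - b) - Digamma c) * (Digamma c - Digamma (c - b))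
      + (Polygamma 1 c - Polygamma 1 (c - b)) * Beta (c - b) b = - log_moment b c 2"
  proof (rule DERIV_eq_supporting_slope[OF dI1])
    show "0 < c - b" using c by simp
    fix y assume "\<bar>c - y\<bar> < c - b"
    then have "b < y" by linarith
    then show "Beta (c - b) b * (Digamma c - Digamma (c - b)) + (y - c) * - log_moment b c 2
        \<le> Beta (y - b) b * (Digamma y - Digamma (y - b))"
      using log_moment_tangent[OF b \<open>b < y\<close> c, of 1] log_moment_1[OF b c] log_moment_1[OF b \<open>b < y\<close>]
      by (simp add: numeral_2_eq_2)
  qed
  then show ?thesis by (simp add: algebra_simps power2_eq_square)
qed

section \<open>Moments of \<open>U\<close>\<close>

lemma nn_integral_U_stat:
  assumes iid: "iid_normal M X n \<mu> \<sigma>" and s: "0 < \<sigma>" and n: "2 \<le> n"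
    and [measurable]: "g \<in> borel_measurable borel"
  shows "(\<integral>\<^sup>+\<omega>. g (U_stat X n \<mu> \<omega>) \<partial>M)
     = (\<integral>\<^sup>+w. ennreal (beta_prime_kernel (1/2) (real n / 2) w / Beta ((real n - 1) / 2) (1/2))
          * g (real n * ln (1 + w)) \<partial>lborel)"
proof -
  let ?P = "PiM {..<n} (\<lambda>_. normal_measure \<mu> \<sigma>)"
  let ?U = "\<lambda>x. real n * ln (1 + (std_sum \<mu> \<sigma> n x)\<^sup>2 / (real n * std_ssd \<mu> \<sigma> n x))"
  have n0: "0 < n"
    using n by simp
  have "(\<integral>\<^sup>+\<omega>. g (U_stat X n \<mu> \<omega>) \<partial>M) = (\<integral>\<^sup>+\<omega>. g (?U (\<lambda>i\<in>{..<n}. X i \<omega>)) \<partial>M)"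
    by (simp add: U_stat_eq_std_stats[OF n s])
  also have "\<dots> = (\<integral>\<^sup>+x. g (?U x) \<partial>distr M ?P (\<lambda>\<omega>. \<lambda>i\<in>{..<n}. X i \<omega>))"
    by (rule nn_integral_distr[symmetric, OF iid_normal_distr_PiM(1)[OF iid n0]]) simp
  also have "\<dots> = (\<integral>\<^sup>+x. g (?U x) \<partial>?P)"
    unfolding iid_normal_distr_PiM(2)[OF iid n0] ..
  also have "\<dots> = (\<integral>\<^sup>+w. ennreal (beta_prime_kernel (1/2) (real n / 2) w / Beta ((real n - 1) / 2) (1/2))
      * g (real n * ln (1 + w)) \<partial>lborel)"
    by (rule nn_integral_std_ratio[OF n s]) measurable
  finally show ?thesis .
qed

lemma nn_integral_U_stat_power:
  assumes iid: "iid_normal M X n \<mu> \<sigma>" and s: "0 < \<sigma>" and n: "2 \<le> n"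
  shows "(\<integral>\<^sup>+\<omega>. ennreal (U_stat X n \<mu> \<omega> ^ p) \<partial>M)
     = ennreal (real n ^ p / Beta ((real n - 1) / 2) (1/2) * log_moment (1/2) (real n / 2) p)"
proof -
  let ?B = "Beta ((real n - 1) / 2) (1/2)"
  let ?K = "real n ^ p / ?B"
  let ?k = "beta_prime_kernel (1/2) (real n / 2)"
  have B: "0 < ?B"
    using n by (intro Beta_real_pos) auto
  then have K: "0 < ?K" and bc: "1/2 < real n / 2"
    using n by auto
  have "(\<integral>\<^sup>+\<omega>. ennreal (U_stat X n \<mu> \<omega> ^ p) \<partial>M)
      = (\<integral>\<^sup>+w. ennreal (?k w / ?B) * ennreal ((real n * ln (1 + w)) ^ p) \<partial>lborel)"
    by (rule nn_integral_U_stat[OF iid s n]) measurable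
  also have "\<dots> = (\<integral>\<^sup>+w. ennreal (?K * (ln (1 + w) ^ p * ?k w)) \<partial>lborel)"
  proof (rule nn_integral_cong)
    fix w :: real
    have "0 \<le> ?k w / ?B"
      using B by (simp add: beta_prime_kernel_nonneg)
    then have "ennreal (?k w / ?B) * ennreal ((real n * ln (1 + w)) ^ p) = ennreal (?k w / ?B * (real n * ln (1 + w)) ^ p)"
      by (rule ennreal_mult'[symmetric])
    also have "?k w / ?B * (real n * ln (1 + w)) ^ p = ?K * (ln (1 + w) ^ p * ?k w)"
      by (simp add: power_mult_distrib)
    finally show "ennreal (?k w / ?B) * ennreal ((real n * ln (1 + w)) ^ p) = ennreal (?K * (ln (1 + w) ^ p * ?k w))" .
  qed
  also have "\<dots> = ennreal (?K * log_moment (1/2) (real n / 2) p)"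
  proof -
    have "0 \<le> ln (1 + w) ^ p * ?k w" for w
      by (cases "0 < w") (simp_all add: beta_prime_kernel_def)
    then have "0 \<le> ?K * (ln (1 + w) ^ p * ?k w)" for w
      by (rule mult_nonneg_nonneg[OF less_imp_le[OF K]])
    then show ?thesis
      unfolding log_moment_def integral_mult_right_zero[symmetric]
      by (intro nn_integral_eq_integral integrable_mult_right integrable_ln_power_beta_prime_kernel bc AE_I2)
         auto
  qed
  finally show ?thesis .
qed

lemma deriv_Dfun:
  assumes n: "2 \<le> n"
  shows "deriv Dfun (real n - 1) = (Polygamma 1 (real n / 2) - Polygamma 1 ((real n - 1) / 2)) / 2"
proof -
  have "(Dfun has_real_derivative Polygamma 1 ((x + 1) / 2) * (1 / 2) - Polygamma 1 (x / 2) * (1 / 2)) (at x)"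
    if "0 < x" for x :: real
    unfolding Dfun_def[abs_def] using that
    by (auto intro!: derivative_eq_intros has_real_derivative_Digamma[THEN DERIV_chain2])
  from this[of "real n - 1"] show ?thesis
    using n by (simp add: DERIV_imp_deriv field_simps)
qed

lemma m1_eq_log_moment:
  assumes n: "2 \<le> n"
  shows "m1 n = real n / Beta ((real n - 1) / 2) (1/2) * log_moment (1/2) (real n / 2) 1"
proof -
  have b: "(0::real) < 1/2" and bc: "1/2 < real n / 2" and B: "0 < Beta ((real n - 1) / 2) (1/2)"
    using n by (auto intro!: Beta_real_pos)
  have e: "real n / 2 - 1 / 2 = (real n - 1) / 2"
    by (simp add: field_simps)
  show ?thesis
    unfolding log_moment_1[OF b bc] e m1_def Dfun_def using B by (simp add: field_simps)
qed

lemma m2_eq_log_moment: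
  assumes n: "2 \<le> n"
  shows "m2 n = (real n)\<^sup>2 / Beta ((real n - 1) / 2) (1/2) * log_moment (1/2) (real n / 2) 2"
proof -
  have b: "(0::real) < 1/2" and bc: "1/2 < real n / 2" and B: "0 < Beta ((real n - 1) / 2) (1/2)"
    using n by (auto intro!: Beta_real_pos)
  have e: "real n / 2 - 1 / 2 = (real n - 1) / 2"
    by (simp add: field_simps)
  show ?thesis
    unfolding log_moment_2[OF b bc] e m2_def deriv_Dfun[OF n] Dfun_def using B by (simp add: field_simps)
qed

lemma U_stat_moments:
  assumes iid: "iid_normal M X n \<mu> \<sigma>" and s: "0 < \<sigma>" and n: "2 \<le> n"
  shows "integrable M (U_stat X n \<mu>)" "integrable M (\<lambda>\<omega>. (U_stat X n \<mu> \<omega>)\<^sup>2)"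
    and "(LINT \<omega>|M. U_stat X n \<mu> \<omega>) = m1 n"
    and "(LINT \<omega>|M. (U_stat X n \<mu> \<omega> - m1 n)\<^sup>2) = m2 n - (m1 n)\<^sup>2"
proof -
  interpret prob_space M
    using iid by (simp add: iid_normal_def)
  have U_nonneg: "0 \<le> U_stat X n \<mu> \<omega>" for \<omega>
    using n by (simp add: U_stat_def)
  have "(\<lambda>x. real n * ln (1 + (std_sum \<mu> \<sigma> n x)\<^sup>2 / (real n * std_ssd \<mu> \<sigma> n x)))
      \<in> borel_measurable (PiM {..<n} (\<lambda>_. normal_measure \<mu> \<sigma>))"
    by measurable
  from measurable_compose[OF iid_normal_distr_PiM(1)[OF iid] this]
  have [measurable]: "U_stat X n \<mu> \<in> borel_measurable M"
    using n by (subst ext[OF U_stat_eq_std_stats[OF n s]]) simp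
  have moment: "integrable M (\<lambda>\<omega>. U_stat X n \<mu> \<omega> ^ p)
      \<and> (LINT \<omega>|M. U_stat X n \<mu> \<omega> ^ p) = real n ^ p / Beta ((real n - 1) / 2) (1/2) * log_moment (1/2) (real n / 2) p" for p
    using n by (intro nn_integral_eq_integrable[THEN iffD1] nn_integral_U_stat_power[OF iid s n] AE_I2)
      (auto intro!: divide_nonneg_pos mult_nonneg_nonneg zero_le_power Beta_real_pos log_moment_nonneg U_nonneg)
  show i1: "integrable M (U_stat X n \<mu>)" and e1: "(LINT \<omega>|M. U_stat X n \<mu> \<omega>) = m1 n"
    using moment[of 1] by (simp_all add: m1_eq_log_moment[OF n])
  show i2: "integrable M (\<lambda>\<omega>. (U_stat X n \<mu> \<omega>)\<^sup>2)"
    using moment[of 2] by simp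
  have e2: "(LINT \<omega>|M. (U_stat X n \<mu> \<omega>)\<^sup>2) = m2 n"
    using moment[of 2] by (simp add: m2_eq_log_moment[OF n])
  have "(LINT \<omega>|M. (U_stat X n \<mu> \<omega> - m1 n)\<^sup>2)
      = (LINT \<omega>|M. (U_stat X n \<mu> \<omega>)\<^sup>2 - 2 * m1 n * U_stat X n \<mu> \<omega> + (m1 n)\<^sup>2)"
    by (intro Bochner_Integration.integral_cong) (auto simp: power2_diff)
  also have "\<dots> = m2 n - (m1 n)\<^sup>2"
    using i1 i2 e1 e2 prob_space by (simp add: power2_eq_square)
  finally show "(LINT \<omega>|M. (U_stat X n \<mu> \<omega> - m1 n)\<^sup>2) = m2 n - (m1 n)\<^sup>2" .
qed

section \<open>Asymptotics of the moments\<close>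

lemma increment_antimono_of_deriv_antimono:
  fixes f f' :: "real \<Rightarrow> real"
  assumes x: "0 < x" and h: "0 < h"
    and D: "\<And>t. 0 < t \<Longrightarrow> (f has_real_derivative f' t) (at t)"
    and dec: "\<And>s t. 0 < s \<Longrightarrow> s < t \<Longrightarrow> f' t < f' s"
  shows "f (x + 2 * h) - f (x + h) \<le> f (x + h) - f x"
proof -
  obtain z1 where z1: "x < z1" "z1 < x + h" "f (x + h) - f x = (x + h - x) * f' z1"
    using MVT2[of x "x + h" f f'] x h D by auto
  obtain z2 where z2: "x + h < z2" "z2 < x + 2 * h" "f (x + 2 * h) - f (x + h) = (x + 2 * h - (x + h)) * f' z2"
    using MVT2[of "x + h" "x + 2 * h" f f'] x h D by auto
  have "f' z2 < f' z1"
    using z1 z2 x by (intro dec) auto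
  then show ?thesis
    using z1(3) z2(3) h by simp
qed

lemma half_step_bounds:
  fixes g F :: "real \<Rightarrow> real"
  assumes sum: "\<And>x. 0 < x \<Longrightarrow> g x + g (x + 1/2) = F x"
    and mono: "\<And>x. 0 < x \<Longrightarrow> g (x + 1/2) \<le> g x"
    and x: "1/2 < x"
  shows "F x / 2 \<le> g x" and "g x \<le> F (x - 1/2) / 2"
  using sum[of x] mono[of x] sum[of "x - 1/2"] mono[of "x - 1/2"] x by simp_all

definition digamma_half_step :: "real \<Rightarrow> real" where
  "digamma_half_step x = Digamma (x + 1/2) - Digamma x"

definition trigamma_half_step :: "real \<Rightarrow> real" where
  "trigamma_half_step x = Polygamma 1 x - Polygamma 1 (x + 1/2)"

lemma digamma_half_step_bounds:
  assumes "1/2 < x"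
  shows "1 / (2 * x) \<le> digamma_half_step x" "digamma_half_step x \<le> 1 / (2 * x - 1)"
proof -
  have sum: "digamma_half_step x + digamma_half_step (x + 1/2) = 1 / x" if "0 < x" for x :: real
    unfolding digamma_half_step_def using Digamma_plus1[of x] that by (simp add: add.assoc)
  have mono: "digamma_half_step (x + 1/2) \<le> digamma_half_step x" if "0 < x" for x :: real
    unfolding digamma_half_step_def
    using increment_antimono_of_deriv_antimono[OF that, of "1/2" Digamma "Polygamma 1"]
      has_real_derivative_Digamma Polygamma_real_strict_antimono[of _ _ 1]
    by (simp add: add.assoc)
  show "1 / (2 * x) \<le> digamma_half_step x" "digamma_half_step x \<le> 1 / (2 * x - 1)"
    using half_step_bounds[of digamma_half_step "\<lambda>x. 1 / x", OF sum mono assms] assms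
    by (simp_all add: field_simps)
qed

lemma trigamma_half_step_bounds:
  assumes "1/2 < x"
  shows "1 / (2 * x\<^sup>2) \<le> trigamma_half_step x" "trigamma_half_step x \<le> 1 / (2 * (x - 1/2)\<^sup>2)"
proof -
  have sum: "trigamma_half_step x + trigamma_half_step (x + 1/2) = 1 / x\<^sup>2" if "0 < x" for x :: real
    unfolding trigamma_half_step_def using Polygamma_plus1[of x 1] that
    by (simp add: add.assoc power2_eq_square)
  have D: "((\<lambda>t. - Polygamma 1 t) has_real_derivative - Polygamma 2 t) (at t)" if "0 < t" for t :: real
  proof -
    have "t \<notin> \<int>\<^sub>\<le>\<^sub>0"
      using that by auto
    then show ?thesis
      using has_field_derivative_Polygamma[of t 1 UNIV] by (auto intro!: derivative_eq_intros simp: numeral_2_eq_2)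
  qed
  have mono: "trigamma_half_step (x + 1/2) \<le> trigamma_half_step x" if "0 < x" for x :: real
    unfolding trigamma_half_step_def
    using increment_antimono_of_deriv_antimono[OF that, of "1/2" "\<lambda>t. - Polygamma 1 t" "\<lambda>t. - Polygamma 2 t"]
      D Polygamma_real_strict_mono[of _ _ 2]
    by (simp add: add.assoc)
  show "1 / (2 * x\<^sup>2) \<le> trigamma_half_step x" "trigamma_half_step x \<le> 1 / (2 * (x - 1/2)\<^sup>2)"
    using half_step_bounds[of trigamma_half_step "\<lambda>x. 1 / x\<^sup>2", OF sum mono assms]
    by simp_all
qed

lemma m1_eq_digamma_half_step: "m1 n = real n * digamma_half_step ((real n - 1) / 2)"
  unfolding m1_def Dfun_def digamma_half_step_def by (simp add: field_simps)

lemma variance_eq_trigamma_half_step: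
  assumes n: "2 \<le> n"
  shows "m2 n - (m1 n)\<^sup>2 = (real n)\<^sup>2 * trigamma_half_step ((real n - 1) / 2)"
proof -
  have e: "(real n - 1) / 2 + 1 / 2 = real n / 2"
    by (simp add: field_simps)
  show ?thesis
    unfolding m2_def m1_def deriv_Dfun[OF n] trigamma_half_step_def e by (simp add: field_simps)
qed

lemma m1_tendsto_1: "m1 \<longlonglongrightarrow> 1"
proof (rule tendsto_sandwich[of "\<lambda>n. real n / (real n - 1)" _ _ "\<lambda>n. real n / (real n - 2)"])
  show "\<forall>\<^sub>F n in sequentially. real n / (real n - 1) \<le> m1 n"
    using eventually_ge_at_top[of "3::nat"]
  proof eventually_elim
    case (elim n)
    then have "real n * (1 / (2 * ((real n - 1) / 2))) \<le> real n * digamma_half_step ((real n - 1) / 2)"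
      by (intro mult_left_mono digamma_half_step_bounds) auto
    moreover have "real n * (1 / (2 * ((real n - 1) / 2))) = real n / (real n - 1)"
      using elim by (simp add: field_simps)
    ultimately show ?case
      by (simp add: m1_eq_digamma_half_step)
  qed
  show "\<forall>\<^sub>F n in sequentially. m1 n \<le> real n / (real n - 2)"
    using eventually_ge_at_top[of "3::nat"]
  proof eventually_elim
    case (elim n)
    then have "real n * digamma_half_step ((real n - 1) / 2) \<le> real n * (1 / (2 * ((real n - 1) / 2) - 1))"
      by (intro mult_left_mono digamma_half_step_bounds) auto
    then show ?case
      using elim by (simp add: m1_eq_digamma_half_step field_simps)
  qed
qed real_asymp+

lemma variance_tendsto_2: "(\<lambda>n. m2 n - (m1 n)\<^sup>2) \<longlonglongrightarrow> 2"
proof (rule tendsto_sandwich[of "\<lambda>n. 2 * (real n)\<^sup>2 / (real n - 1)\<^sup>2" _ _ "\<lambda>n. 2 * (real n)\<^sup>2 / (real n - 2)\<^sup>2"])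
  show "\<forall>\<^sub>F n in sequentially. 2 * (real n)\<^sup>2 / (real n - 1)\<^sup>2 \<le> m2 n - (m1 n)\<^sup>2"
    using eventually_ge_at_top[of "3::nat"]
  proof eventually_elim
    case (elim n)
    then have "(real n)\<^sup>2 * (1 / (2 * ((real n - 1) / 2)\<^sup>2)) \<le> (real n)\<^sup>2 * trigamma_half_step ((real n - 1) / 2)"
      by (intro mult_left_mono trigamma_half_step_bounds) auto
    then show ?case
      using elim by (simp add: variance_eq_trigamma_half_step field_simps)
  qed
  show "\<forall>\<^sub>F n in sequentially. m2 n - (m1 n)\<^sup>2 \<le> 2 * (real n)\<^sup>2 / (real n - 2)\<^sup>2"
    using eventually_ge_at_top[of "3::nat"]
  proof eventually_elim
    case (elim n)
    have h: "(real n - 1) / 2 - 1 / 2 = (real n - 2) / 2"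
      by (simp add: field_simps)
    have "trigamma_half_step ((real n - 1) / 2) \<le> 1 / (2 * ((real n - 2) / 2)\<^sup>2)"
      using trigamma_half_step_bounds(2)[of "(real n - 1) / 2"] elim unfolding h by simp
    then have "(real n)\<^sup>2 * trigamma_half_step ((real n - 1) / 2) \<le> (real n)\<^sup>2 * (1 / (2 * ((real n - 2) / 2)\<^sup>2))"
      by (rule mult_left_mono) simp
    then show ?case
      using elim by (simp add: variance_eq_trigamma_half_step field_simps)
  qed
qed real_asymp+

theorem lemma1:
  fixes \<mu>0 \<sigma> :: real
  assumes "\<sigma> > 0"
  shows "(\<forall>n\<ge>2. \<forall>(M :: 'a measure) X. iid_normal M X n \<mu>0 \<sigma> \<longrightarrow>
            integrable M (U_stat X n \<mu>0) \<and>
            integrable M (\<lambda>\<omega>. (U_stat X n \<mu>0 \<omega>)\<^sup>2) \<and>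
            (LINT \<omega>|M. U_stat X n \<mu>0 \<omega>) = m1 n \<and>
            (LINT \<omega>|M. (U_stat X n \<mu>0 \<omega> - (LINT \<omega>'|M. U_stat X n \<mu>0 \<omega>'))\<^sup>2) = m2 n - (m1 n)\<^sup>2)
       \<and> (\<forall>(M :: nat \<Rightarrow> 'a measure) (X :: nat \<Rightarrow> nat \<Rightarrow> 'a \<Rightarrow> real).
            (\<forall>n\<ge>2. iid_normal (M n) (X n) n \<mu>0 \<sigma>) \<longrightarrow>
            ((\<lambda>n. LINT \<omega>|M n. U_stat (X n) n \<mu>0 \<omega>) \<longlonglongrightarrow> 1) \<and>
            ((\<lambda>n. LINT \<omega>|M n. (U_stat (X n) n \<mu>0 \<omega> - (LINT \<omega>'|M n. U_stat (X n) n \<mu>0 \<omega>'))\<^sup>2) \<longlonglongrightarrow> 2))"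
proof (intro conjI allI impI)
  fix n :: nat and M :: "'a measure" and X
  assume "2 \<le> n" "iid_normal M X n \<mu>0 \<sigma>"
  from U_stat_moments[OF this(2) assms this(1)]
  show "integrable M (U_stat X n \<mu>0)" "integrable M (\<lambda>\<omega>. (U_stat X n \<mu>0 \<omega>)\<^sup>2)"
    "(LINT \<omega>|M. U_stat X n \<mu>0 \<omega>) = m1 n"
    "(LINT \<omega>|M. (U_stat X n \<mu>0 \<omega> - (LINT \<omega>'|M. U_stat X n \<mu>0 \<omega>'))\<^sup>2) = m2 n - (m1 n)\<^sup>2"
    by simp_all
next
  fix M :: "nat \<Rightarrow> 'a measure" and X :: "nat \<Rightarrow> nat \<Rightarrow> 'a \<Rightarrow> real"
  assume iid: "\<forall>n\<ge>2. iid_normal (M n) (X n) n \<mu>0 \<sigma>"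
  have moments: "\<forall>\<^sub>F n in sequentially. m1 n = (LINT \<omega>|M n. U_stat (X n) n \<mu>0 \<omega>) \<and>
      m2 n - (m1 n)\<^sup>2 = (LINT \<omega>|M n. (U_stat (X n) n \<mu>0 \<omega> - (LINT \<omega>'|M n. U_stat (X n) n \<mu>0 \<omega>'))\<^sup>2)"
    using eventually_ge_at_top[of "2::nat"]
  proof eventually_elim
    case (elim n)
    from U_stat_moments[OF iid[rule_format, OF elim] assms elim] show ?case
      by simp
  qed
  show "(\<lambda>n. LINT \<omega>|M n. U_stat (X n) n \<mu>0 \<omega>) \<longlonglongrightarrow> 1"
    using moments by (intro Lim_transform_eventually[OF m1_tendsto_1]) (auto elim: eventually_mono)
  show "(\<lambda>n. LINT \<omega>|M n. (U_stat (X n) n \<mu>0 \<omega> - (LINT \<omega>'|M n. U_stat (X n) n \<mu>0 \<omega>'))\<^sup>2) \<longlonglongrightarrow> 2"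
    using moments by (intro Lim_transform_eventually[OF variance_tendsto_2]) (auto elim: eventually_mono)
qed

end
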